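(* Let $\Omega\subset\mathbb{R}^d$ be a bounded Lipschitz domain, let $\mathbf{V}=H^1_0(\Omega)^d$ (complex-valued), let $\rho,\mu,\lambda>0$ and $\omega>0$, and let $$a_1(\mathbf{u},\mathbf{v}) = 2\mu(\varepsilon(\mathbf{u}),\varepsilon(\mathbf{v})) + \lambda(\mathrm{div}\,\mathbf{u},\mathrm{div}\,\mathbf{v}) - \omega^2\rho(\mathbf{u},\mathbf{v}),\qquad \mathbf{u},\mathbf{v}\in\mathbf{V}.$$ Let $\{(\boldsymbol{\psi}_n,\kappa_n)\}_{n\ge0}\subset\mathbf{V}\times\mathbb{R}^+$ be the eigenpairs described in the context, and assume $\omega^2\notin\{\kappa_n : n\ge 0\}$. Set $\overline{m}=\max\{n\in\mathbb{N} : \omega^2>\kappa_n\}$, $\mathbf{V}^-=\mathrm{span}\{\boldsymbol{\psi}_n : 0\le n\le \overline{m}\}$, let $\Pi_{\mathbf{V}^-}$ be the orthogonal projection onto $\mathbf{V}^-$ and $\mathbb{T}=I_{\mathbf{V}}-2\Pi_{\mathbf{V}^-}$. Then $a_1$ is $\mathbb{T}$-coercive. That is, $\mathbb{T}\in\mathcal{L}(\mathbf{V},\mathbf{V})$ is bijective, and there is a constant $\tilde\alpha>0$ such that $|a_1(\mathbf{v},\mathbb{T}\mathbf{v})|\ge\tilde\alpha\|\mathbf{v}\|_{\mathbf{V}}^2$ for all $\mathbf{v}\in\mathbf{V}$.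
   Context: $(\cdot,\cdot)$ denotes the complex $L^2(\Omega)$ inner product, which is linear in the first argument and antilinear in the second. $\varepsilon(\mathbf{u})=\tfrac12(\nabla\mathbf{u}+\nabla\mathbf{u}^T)$. On $\mathbf{V}$ define the inner products - $(\mathbf{u},\mathbf{v})_{0,\rho}=\rho(\mathbf{u},\mathbf{v})$, - $(\mathbf{u},\mathbf{v})_{1,\mu,\lambda}=2\mu(\varepsilon(\mathbf{u}),\varepsilon(\mathbf{v}))+\lambda(\mathrm{div}\,\mathbf{u},\mathrm{div}\,\mathbf{v})$, - $(\mathbf{u},\mathbf{v})_{1,\mu,\lambda,\rho}=(\mathbf{u},\mathbf{v})_{1,\mu,\lambda}+(\mathbf{u},\mathbf{v})_{0,\rho}$. The norm on $\mathbf{V}$ is $\|\cdot\|_{1,\mu,\lambda,\rho}$. Orthogonality in $\mathbf{V}$ (in particular for the projection $\Pi_{\mathbf{V}^-}$) refers to $(\cdot,\cdot)_{1,\mu,\lambda,\rho}$. The family $\{\boldsymbol{\psi}_n\}$ is a Hilbert basis of $\mathbf{V}$ consisting of eigenvectors of the elasticity operator. It satisfies $(\boldsymbol{\psi}_n,\mathbf{v})_{1,\mu,\lambda}=\kappa_n(\boldsymbol{\psi}_n,\mathbf{v})_{0,\rho}$ for all $\mathbf{v}\in\mathbf{V}$, with $\kappa_n\to+\infty$. It is orthogonal in $(\cdot,\cdot)_{1,\mu,\lambda}$ and in $(\cdot,\cdot)_{0,\rho}$, and normalized by $\|\boldsymbol{\psi}_n\|_{1,\mu,\lambda,\rho}=1$.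 *)

theory Defs
  imports "HOL-Analysis.Analysis"
begin

definition lipschitz_boundary :: "(real^'d) set \<Rightarrow> bool" where
  "lipschitz_boundary \<Omega> \<longleftrightarrow>
     (\<forall>x\<in>frontier \<Omega>. \<exists>e r L g. norm e = 1 \<and> r > 0 \<and> L-lipschitz_on UNIV g \<and>
        (\<forall>y. g y = g (y - (y \<bullet> e) *\<^sub>R e)) \<and>
        \<Omega> \<inter> ball x r = {y \<in> ball x r. y \<bullet> e < g y})"

definition bounded_lipschitz_domain :: "(real^'d) set \<Rightarrow> bool" where
  "bounded_lipschitz_domain \<Omega> \<longleftrightarrow>
     open \<Omega> \<and> connected \<Omega> \<and> \<Omega> \<noteq> {} \<and> bounded \<Omega> \<and> lipschitz_boundary \<Omega>"

definition cpartial :: "'d \<Rightarrow> (real^'d \<Rightarrow> real) \<Rightarrow> real^'d \<Rightarrow> real" where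
  "cpartial j f x = deriv (\<lambda>t. f (x + t *\<^sub>R axis j 1)) 0"

fun iter_partial :: "'d list \<Rightarrow> (real^'d \<Rightarrow> real) \<Rightarrow> real^'d \<Rightarrow> real" where
  "iter_partial [] f = f"
| "iter_partial (j # js) f = cpartial j (iter_partial js f)"

definition smooth_fun :: "(real^'d \<Rightarrow> real) \<Rightarrow> bool" where
  "smooth_fun f \<longleftrightarrow>
     (\<forall>js. continuous_on UNIV (iter_partial js f) \<and>
        (\<forall>j x. (\<lambda>t. iter_partial js f (x + t *\<^sub>R axis j 1)) differentiable (at 0)))"

definition tsupport :: "(real^'d \<Rightarrow> real) \<Rightarrow> (real^'d) set" where
  "tsupport f = closure {x. f x \<noteq> 0}"

definition test_fun :: "(real^'d) set \<Rightarrow> (real^'d \<Rightarrow> real) \<Rightarrow> bool" where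
  "test_fun \<Omega> \<phi> \<longleftrightarrow> smooth_fun \<phi> \<and> compact (tsupport \<phi>) \<and> tsupport \<phi> \<subseteq> \<Omega>"

definition test_field :: "(real^'d) set \<Rightarrow> (real^'d \<Rightarrow> complex^'d) \<Rightarrow> bool" where
  "test_field \<Omega> u \<longleftrightarrow>
     (\<forall>i. test_fun \<Omega> (\<lambda>x. Re (u x $ i)) \<and> test_fun \<Omega> (\<lambda>x. Im (u x $ i)))"

definition L2 :: "(real^'d) set \<Rightarrow> (real^'d \<Rightarrow> complex) \<Rightarrow> bool" where
  "L2 \<Omega> f \<longleftrightarrow> f \<in> borel_measurable (lebesgue_on \<Omega>) \<and>
     integrable (lebesgue_on \<Omega>) (\<lambda>x. (cmod (f x))\<^sup>2)"

definition sL2ip :: "(real^'d) set \<Rightarrow> (real^'d \<Rightarrow> complex) \<Rightarrow> (real^'d \<Rightarrow> complex) \<Rightarrow> complex" where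
  "sL2ip \<Omega> f g = (LINT x | lebesgue_on \<Omega>. f x * cnj (g x))"

definition is_weak_partial ::
  "(real^'d) set \<Rightarrow> 'd \<Rightarrow> (real^'d \<Rightarrow> complex) \<Rightarrow> (real^'d \<Rightarrow> complex) \<Rightarrow> bool" where
  "is_weak_partial \<Omega> j f g \<longleftrightarrow>
     (\<forall>\<phi>. test_fun \<Omega> \<phi> \<longrightarrow>
        (LINT x | lebesgue_on \<Omega>. f x * of_real (cpartial j \<phi> x))
          = - (LINT x | lebesgue_on \<Omega>. g x * of_real (\<phi> x)))"

definition H1 :: "(real^'d) set \<Rightarrow> (real^'d \<Rightarrow> complex) \<Rightarrow> bool" where
  "H1 \<Omega> f \<longleftrightarrow> L2 \<Omega> f \<and> (\<forall>j. \<exists>g. L2 \<Omega> g \<and> is_weak_partial \<Omega> j f g)"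

definition wpartial :: "(real^'d) set \<Rightarrow> 'd \<Rightarrow> (real^'d \<Rightarrow> complex) \<Rightarrow> real^'d \<Rightarrow> complex" where
  "wpartial \<Omega> j f = (SOME g. L2 \<Omega> g \<and> is_weak_partial \<Omega> j f g)"

definition H1_normsq :: "(real^'d) set \<Rightarrow> (real^'d \<Rightarrow> complex^'d) \<Rightarrow> real" where
  "H1_normsq \<Omega> u = (\<Sum>i\<in>UNIV. Re (sL2ip \<Omega> (\<lambda>x. u x $ i) (\<lambda>x. u x $ i)) +
      (\<Sum>j\<in>UNIV. Re (sL2ip \<Omega> (wpartial \<Omega> j (\<lambda>x. u x $ i)) (wpartial \<Omega> j (\<lambda>x. u x $ i)))))"

definition H10 :: "(real^'d) set \<Rightarrow> (real^'d \<Rightarrow> complex^'d) set" where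
  "H10 \<Omega> = {u. (\<forall>i. H1 \<Omega> (\<lambda>x. u x $ i)) \<and>
      (\<exists>\<phi>. (\<forall>k. test_field \<Omega> (\<phi> k)) \<and>
           (\<lambda>k. H1_normsq \<Omega> (\<lambda>x. u x - \<phi> k x)) \<longlonglongrightarrow> 0)}"

definition L2ip :: "(real^'d) set \<Rightarrow> (real^'d \<Rightarrow> complex^'d) \<Rightarrow> (real^'d \<Rightarrow> complex^'d) \<Rightarrow> complex" where
  "L2ip \<Omega> u v = (\<Sum>i\<in>UNIV. sL2ip \<Omega> (\<lambda>x. u x $ i) (\<lambda>x. v x $ i))"

definition strain :: "(real^'d) set \<Rightarrow> (real^'d \<Rightarrow> complex^'d) \<Rightarrow> 'd \<Rightarrow> 'd \<Rightarrow> real^'d \<Rightarrow> complex" where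
  "strain \<Omega> u i j x = (wpartial \<Omega> j (\<lambda>y. u y $ i) x + wpartial \<Omega> i (\<lambda>y. u y $ j) x) / 2"

definition wdiv :: "(real^'d) set \<Rightarrow> (real^'d \<Rightarrow> complex^'d) \<Rightarrow> real^'d \<Rightarrow> complex" where
  "wdiv \<Omega> u x = (\<Sum>i\<in>UNIV. wpartial \<Omega> i (\<lambda>y. u y $ i) x)"

definition ip0 :: "real \<Rightarrow> (real^'d) set \<Rightarrow> (real^'d \<Rightarrow> complex^'d) \<Rightarrow> (real^'d \<Rightarrow> complex^'d) \<Rightarrow> complex" where
  "ip0 \<rho> \<Omega> u v = of_real \<rho> * L2ip \<Omega> u v"

definition ip1 :: "real \<Rightarrow> real \<Rightarrow> (real^'d) set \<Rightarrow> (real^'d \<Rightarrow> complex^'d) \<Rightarrow> (real^'d \<Rightarrow> complex^'d) \<Rightarrow> complex" where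
  "ip1 \<mu> lam \<Omega> u v =
     of_real (2 * \<mu>) * (\<Sum>i\<in>UNIV. \<Sum>j\<in>UNIV. sL2ip \<Omega> (strain \<Omega> u i j) (strain \<Omega> v i j))
     + of_real lam * sL2ip \<Omega> (wdiv \<Omega> u) (wdiv \<Omega> v)"

definition ipV :: "real \<Rightarrow> real \<Rightarrow> real \<Rightarrow> (real^'d) set \<Rightarrow> (real^'d \<Rightarrow> complex^'d) \<Rightarrow> (real^'d \<Rightarrow> complex^'d) \<Rightarrow> complex" where
  "ipV \<mu> lam \<rho> \<Omega> u v = ip1 \<mu> lam \<Omega> u v + ip0 \<rho> \<Omega> u v"

definition normV :: "real \<Rightarrow> real \<Rightarrow> real \<Rightarrow> (real^'d) set \<Rightarrow> (real^'d \<Rightarrow> complex^'d) \<Rightarrow> real" where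
  "normV \<mu> lam \<rho> \<Omega> u = sqrt (Re (ipV \<mu> lam \<rho> \<Omega> u u))"

definition a1 :: "real \<Rightarrow> real \<Rightarrow> real \<Rightarrow> real \<Rightarrow> (real^'d) set \<Rightarrow> (real^'d \<Rightarrow> complex^'d) \<Rightarrow> (real^'d \<Rightarrow> complex^'d) \<Rightarrow> complex" where
  "a1 \<mu> lam \<rho> \<omega> \<Omega> u v = ip1 \<mu> lam \<Omega> u v - of_real (\<omega>\<^sup>2) * ip0 \<rho> \<Omega> u v"

definition elastic_eigenbasis ::
  "real \<Rightarrow> real \<Rightarrow> real \<Rightarrow> (real^'d) set \<Rightarrow> (nat \<Rightarrow> real^'d \<Rightarrow> complex^'d) \<Rightarrow> (nat \<Rightarrow> real) \<Rightarrow> bool" where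
  "elastic_eigenbasis \<mu> lam \<rho> \<Omega> \<psi> \<kappa> \<longleftrightarrow>
     (\<forall>n. \<psi> n \<in> H10 \<Omega>) \<and> (\<forall>n. \<kappa> n > 0) \<and> mono \<kappa> \<and> filterlim \<kappa> at_top sequentially \<and>
     (\<forall>n. \<forall>v\<in>H10 \<Omega>. ip1 \<mu> lam \<Omega> (\<psi> n) v = of_real (\<kappa> n) * ip0 \<rho> \<Omega> (\<psi> n) v) \<and>
     (\<forall>n m. n \<noteq> m \<longrightarrow> ip1 \<mu> lam \<Omega> (\<psi> n) (\<psi> m) = 0 \<and> ip0 \<rho> \<Omega> (\<psi> n) (\<psi> m) = 0) \<and>
     (\<forall>n. normV \<mu> lam \<rho> \<Omega> (\<psi> n) = 1) \<and>
     (\<forall>v\<in>H10 \<Omega>. \<forall>e>0. \<exists>N c. normV \<mu> lam \<rho> \<Omega> (\<lambda>x. v x - (\<Sum>n<N. c n *s \<psi> n x)) < e)"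

text \<open>Indices n with omega^2 > kappa_n, i.e. {0..m-bar} (empty if omega^2 < kappa_0).\<close>
definition low_modes :: "real \<Rightarrow> (nat \<Rightarrow> real) \<Rightarrow> nat set" where
  "low_modes \<omega> \<kappa> = {n. \<omega>\<^sup>2 > \<kappa> n}"

definition Vminus :: "real \<Rightarrow> (nat \<Rightarrow> real^'d \<Rightarrow> complex^'d) \<Rightarrow> (nat \<Rightarrow> real) \<Rightarrow> (real^'d \<Rightarrow> complex^'d) set" where
  "Vminus \<omega> \<psi> \<kappa> = {(\<lambda>x. \<Sum>n\<in>low_modes \<omega> \<kappa>. c n *s \<psi> n x) | c. True}"

definition projV :: "real \<Rightarrow> real \<Rightarrow> real \<Rightarrow> (real^'d) set \<Rightarrow> (real^'d \<Rightarrow> complex^'d) set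
    \<Rightarrow> (real^'d \<Rightarrow> complex^'d) \<Rightarrow> real^'d \<Rightarrow> complex^'d" where
  "projV \<mu> lam \<rho> \<Omega> W v = (THE w. w \<in> W \<and> (\<forall>z\<in>W. ipV \<mu> lam \<rho> \<Omega> (\<lambda>x. v x - w x) z = 0))"

definition Top :: "real \<Rightarrow> real \<Rightarrow> real \<Rightarrow> real \<Rightarrow> (real^'d) set \<Rightarrow> (nat \<Rightarrow> real^'d \<Rightarrow> complex^'d)
    \<Rightarrow> (nat \<Rightarrow> real) \<Rightarrow> (real^'d \<Rightarrow> complex^'d) \<Rightarrow> real^'d \<Rightarrow> complex^'d" where
  "Top \<mu> lam \<rho> \<omega> \<Omega> \<psi> \<kappa> v =
     (\<lambda>x. v x - 2 *s projV \<mu> lam \<rho> \<Omega> (Vminus \<omega> \<psi> \<kappa>) v x)"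

end

(* The eigenbasis diagonalises both a_1 and the inner product of V: on the mode psi_n, a_1 is
   (kappa_n - omega^2) / (kappa_n + 1) times the V-inner product.  Split v = p + w into its
   projection p onto the finitely many modes with kappa_n < omega^2 and the V-orthogonal
   remainder w.  Then T v = w - p and a_1(v, T v) = a_1(w, w) - a_1(p, p), where
   -a_1(p, p) >= min_n (omega^2 - kappa_n) / (kappa_n + 1) ||p||^2 directly, and
   a_1(w, w) >= (k - omega^2) / (k + 1) ||w||^2 with k the first eigenvalue above omega^2,
   because by completeness w is a limit of combinations of modes with kappa_n >= k.
   That the elasticity forms are sesquilinear on H^1_0 at all rests on the uniqueness of weak
   derivatives, i.e. on the fundamental lemma of the calculus of variations, which is proved
   with smooth bump functions approximating the indicators of boxes. *)

theory Submission
  imports Defs "HOL-Computational_Algebra.Polynomial" "HOL-Real_Asymp.Real_Asymp"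
begin

section \<open>Smooth functions and bump functions\<close>

definition axis_differentiable :: "(real^'d \<Rightarrow> real) \<Rightarrow> bool" where
  "axis_differentiable f \<longleftrightarrow> (\<forall>j x. (\<lambda>t. f (x + t *\<^sub>R axis j 1)) differentiable (at 0))"

lemma cpartial_eqI:
  "((\<lambda>t. f (x + t *\<^sub>R axis j 1)) has_real_derivative D) (at 0) \<Longrightarrow> cpartial j f x = D"
  unfolding cpartial_def by (rule DERIV_imp_deriv)

lemma axis_differentiableI:
  assumes "\<And>j x. \<exists>D. ((\<lambda>t. f (x + t *\<^sub>R axis j 1)) has_real_derivative D) (at 0)"
  shows "axis_differentiable f"
  using assms unfolding axis_differentiable_def real_differentiable_def by blast

lemma axis_differentiable_has_derivative:
  assumes "axis_differentiable f"
  shows "((\<lambda>t. f (x + t *\<^sub>R axis j 1)) has_real_derivative cpartial j f x) (at 0)"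
proof -
  from assms obtain D where D: "((\<lambda>t. f (x + t *\<^sub>R axis j 1)) has_real_derivative D) (at 0)"
    unfolding axis_differentiable_def real_differentiable_def by blast
  with cpartial_eqI[OF D] show ?thesis by simp
qed

lemma axis_differentiable_has_derivative_at:
  assumes "axis_differentiable f"
  shows "((\<lambda>t. f (x + t *\<^sub>R axis j 1)) has_real_derivative cpartial j f (x + s *\<^sub>R axis j 1)) (at s)"
proof -
  have "((\<lambda>t. f ((x + s *\<^sub>R axis j 1) + t *\<^sub>R axis j 1)) has_real_derivative
      cpartial j f (x + s *\<^sub>R axis j 1)) (at 0)"
    by (rule axis_differentiable_has_derivative[OF assms])
  then have "((\<lambda>t. f (x + (t + s) *\<^sub>R axis j 1)) has_real_derivative
      cpartial j f (x + s *\<^sub>R axis j 1)) (at 0)"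
    by (simp add: algebra_simps)
  then show ?thesis using DERIV_shift[of "\<lambda>t. f (x + t *\<^sub>R axis j 1)" _ 0 s] by simp
qed

lemma cpartial_add:
  assumes "axis_differentiable f" "axis_differentiable g"
  shows "cpartial j (\<lambda>x. f x + g x) = (\<lambda>x. cpartial j f x + cpartial j g x)"
  by (rule ext, rule cpartial_eqI, rule DERIV_add)
     (use assms in \<open>auto intro: axis_differentiable_has_derivative\<close>)

lemma axis_differentiable_add:
  "axis_differentiable f \<Longrightarrow> axis_differentiable g \<Longrightarrow> axis_differentiable (\<lambda>x. f x + g x)"
  by (rule axis_differentiableI, rule exI,
      rule DERIV_add[OF axis_differentiable_has_derivative axis_differentiable_has_derivative])

lemma cpartial_mult:
  assumes "axis_differentiable f" "axis_differentiable g"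
  shows "cpartial j (\<lambda>x. f x * g x) = (\<lambda>x. cpartial j f x * g x + f x * cpartial j g x)"
proof
  fix x show "cpartial j (\<lambda>x. f x * g x) x = cpartial j f x * g x + f x * cpartial j g x"
    by (rule cpartial_eqI)
       (use DERIV_mult'[OF assms[THEN axis_differentiable_has_derivative], of x j x j] in
         \<open>simp add: algebra_simps\<close>)
qed

lemma axis_differentiable_mult:
  "axis_differentiable f \<Longrightarrow> axis_differentiable g \<Longrightarrow> axis_differentiable (\<lambda>x. f x * g x)"
  by (rule axis_differentiableI, rule exI,
      rule DERIV_mult'[OF axis_differentiable_has_derivative axis_differentiable_has_derivative])

lemma smooth_fun_iff:
  "smooth_fun f \<longleftrightarrow>
    (\<forall>js. continuous_on UNIV (iter_partial js f) \<and> axis_differentiable (iter_partial js f))"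
  unfolding smooth_fun_def axis_differentiable_def by auto

lemma smooth_fun_continuous: "smooth_fun f \<Longrightarrow> continuous_on UNIV f"
  using smooth_fun_iff[of f] iter_partial.simps(1) by metis

lemma smooth_fun_axis_differentiable: "smooth_fun f \<Longrightarrow> axis_differentiable f"
  using smooth_fun_iff[of f] iter_partial.simps(1) by metis

lemma iter_partial_append: "iter_partial (js @ ks) f = iter_partial js (iter_partial ks f)"
  by (induction js) auto

lemma smooth_fun_cpartial: "smooth_fun f \<Longrightarrow> smooth_fun (cpartial j f)"
  unfolding smooth_fun_iff by (metis iter_partial_append iter_partial.simps)

lemma iter_partial_add:
  assumes "\<And>ms. length ms < length ks \<Longrightarrow>
    axis_differentiable (iter_partial ms f) \<and> axis_differentiable (iter_partial ms g)"
  shows "iter_partial ks (\<lambda>x. f x + g x) = (\<lambda>x. iter_partial ks f x + iter_partial ks g x)"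
  using assms
proof (induction ks)
  case (Cons k ks)
  then have "axis_differentiable (iter_partial ks f)" "axis_differentiable (iter_partial ks g)"
    by auto
  with Cons show ?case by (simp add: cpartial_add)
qed simp

lemma smooth_fun_add:
  assumes "smooth_fun f" "smooth_fun g"
  shows "smooth_fun (\<lambda>x. f x + g x)"
proof -
  have "iter_partial ks (\<lambda>x. f x + g x) = (\<lambda>x. iter_partial ks f x + iter_partial ks g x)" for ks
    by (rule iter_partial_add) (use assms in \<open>auto simp: smooth_fun_iff\<close>)
  then show ?thesis
    using assms unfolding smooth_fun_iff by (auto intro!: continuous_on_add axis_differentiable_add)
qed

lemma cpartial_const: "cpartial j (\<lambda>x. c) = (\<lambda>x. 0)"
  by (rule ext, rule cpartial_eqI) simp

lemma axis_differentiable_const: "axis_differentiable (\<lambda>x. c)"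
  by (rule axis_differentiableI) (use DERIV_const in blast)

lemma iter_partial_const: "iter_partial js (\<lambda>x. c) = (if js = [] then (\<lambda>x. c) else (\<lambda>x. 0))"
  by (induction js) (auto simp: cpartial_const)

lemma smooth_fun_const: "smooth_fun (\<lambda>x. c)"
  unfolding smooth_fun_iff iter_partial_const by (simp add: axis_differentiable_const)

text \<open>Leibniz's rule, by strong induction on the number of derivatives: distributing the
  remaining derivatives over the sum needs the regularity of all lower orders.\<close>

lemma iter_partial_mult_regular:
  assumes "smooth_fun f" "smooth_fun g"
  shows "continuous_on UNIV (iter_partial js (\<lambda>x. f x * g x)) \<and>
    axis_differentiable (iter_partial js (\<lambda>x. f x * g x))"
  using assms
proof (induction js arbitrary: f g rule: length_induct)
  case (1 js)
  note f = \<open>smooth_fun f\<close> and g = \<open>smooth_fun g\<close>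
  show ?case
  proof (cases js rule: rev_cases)
    case Nil
    then show ?thesis using f g
      by (simp add: continuous_on_mult axis_differentiable_mult
          smooth_fun_continuous smooth_fun_axis_differentiable)
  next
    case (snoc ks j)
    have IH: "continuous_on UNIV (iter_partial ms (\<lambda>x. f' x * g' x)) \<and>
        axis_differentiable (iter_partial ms (\<lambda>x. f' x * g' x))"
      if "length ms \<le> length ks" "smooth_fun f'" "smooth_fun g'"
      for ms :: "'a list" and f' g' :: "real^'a \<Rightarrow> real"
    proof -
      have "length ms < length js" using that(1) snoc by simp
      then show ?thesis by (rule "1.IH"[rule_format, OF _ that(2,3)])
    qed
    note IH1 = IH[OF _ smooth_fun_cpartial[OF f] g] and IH2 = IH[OF _ f smooth_fun_cpartial[OF g]]
    have "iter_partial js (\<lambda>x. f x * g x) =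
        iter_partial ks (\<lambda>x. cpartial j f x * g x + f x * cpartial j g x)"
      using f g by (simp add: snoc iter_partial_append cpartial_mult smooth_fun_axis_differentiable)
    also have "iter_partial ks (\<lambda>x. cpartial j f x * g x + f x * cpartial j g x) =
        (\<lambda>x. iter_partial ks (\<lambda>x. cpartial j f x * g x) x +
          iter_partial ks (\<lambda>x. f x * cpartial j g x) x)"
      by (rule iter_partial_add) (use IH1 IH2 in auto)
    finally show ?thesis
      using IH1[of ks] IH2[of ks] by (auto intro!: continuous_on_add axis_differentiable_add)
  qed
qed

lemma smooth_fun_mult: "smooth_fun f \<Longrightarrow> smooth_fun g \<Longrightarrow> smooth_fun (\<lambda>x. f x * g x)"
  unfolding smooth_fun_iff[of "\<lambda>x. f x * g x"] using iter_partial_mult_regular by blast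

lemma smooth_fun_prod:
  "finite S \<Longrightarrow> (\<And>i. i \<in> S \<Longrightarrow> smooth_fun (g i)) \<Longrightarrow> smooth_fun (\<lambda>x. \<Prod>i\<in>S. g i x)"
  by (induction S rule: finite_induct) (auto intro: smooth_fun_const smooth_fun_mult)

definition derivative_chain :: "(nat \<Rightarrow> real \<Rightarrow> real) \<Rightarrow> bool" where
  "derivative_chain D \<longleftrightarrow> (\<forall>n t. (D n has_real_derivative D (Suc n) t) (at t))"

lemma derivative_chain_coord_has_derivative:
  assumes "derivative_chain D"
  shows "((\<lambda>t. D m ((x + t *\<^sub>R axis k 1) $ i)) has_real_derivative
    (if i = k then D (Suc m) (x $ i) else 0)) (at 0)"
proof (cases "i = k")
  case True
  have "((\<lambda>t. D m (x $ i + t)) has_real_derivative D (Suc m) (x $ i) * 1) (at 0)"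
    by (rule DERIV_chain2[where g="\<lambda>t. x $ i + t"])
       (use assms in \<open>auto simp: derivative_chain_def intro!: derivative_eq_intros\<close>)
  then show ?thesis using True by (simp add: axis_def)
qed (simp add: axis_def)

lemma iter_partial_coord:
  assumes "derivative_chain D"
  shows "iter_partial js (\<lambda>x. D 0 (x $ i)) =
    (\<lambda>x. if set js \<subseteq> {i} then D (length js) (x $ i) else 0)"
proof (induction js)
  case (Cons k ks)
  have "cpartial k (\<lambda>x. D (length ks) (x $ i)) x = (if i = k then D (Suc (length ks)) (x $ i) else 0)"
    for x
    by (rule cpartial_eqI, rule derivative_chain_coord_has_derivative[OF assms])
  with Cons show ?case by (cases "set ks \<subseteq> {i}") (auto simp: cpartial_const)
qed simp

lemma smooth_fun_coord:
  assumes D: "derivative_chain D"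
  shows "smooth_fun (\<lambda>x. D 0 (x $ i))"
proof -
  have continuous: "continuous_on UNIV (\<lambda>x. D n (x $ i))" for n
    using D unfolding derivative_chain_def
    by (intro continuous_at_imp_continuous_on ballI isCont_o2[where f="\<lambda>x. x $ i" and g="D n"])
       (auto intro: DERIV_isCont)
  have differentiable: "axis_differentiable (\<lambda>x. D n (x $ i))" for n
    by (rule axis_differentiableI) (use derivative_chain_coord_has_derivative[OF D] in blast)
  show ?thesis
    unfolding smooth_fun_iff iter_partial_coord[OF D]
  proof
    fix js :: "'a list"
    show "continuous_on UNIV (\<lambda>x. if set js \<subseteq> {i} then D (length js) (x $ i) else 0) \<and>
        axis_differentiable (\<lambda>x. if set js \<subseteq> {i} then D (length js) (x $ i) else 0)"
      by (cases "set js \<subseteq> {i}") (simp_all add: continuous differentiable axis_differentiable_const)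
  qed
qed

lemma derivative_chain_affine:
  assumes "derivative_chain D"
  shows "derivative_chain (\<lambda>n t. c ^ n * D n (c * t + e))"
  unfolding derivative_chain_def
proof (intro allI)
  fix n t
  have "((\<lambda>t. D n (c * t + e)) has_real_derivative D (Suc n) (c * t + e) * c) (at t)"
    by (rule DERIV_chain2[where g="\<lambda>t. c * t + e"])
       (use assms in \<open>auto simp: derivative_chain_def intro!: derivative_eq_intros\<close>)
  then show "((\<lambda>t. c ^ n * D n (c * t + e)) has_real_derivative
      c ^ Suc n * D (Suc n) (c * t + e)) (at t)"
    using DERIV_cmult[where c="c ^ n"] by (fastforce simp: algebra_simps)
qed

text \<open>The derivatives of \<open>exp (-1/t)\<close> are \<open>p\<^sub>n(1/t) exp (-1/t)\<close> with
  \<open>p\<^sub>0 = 1\<close> and \<open>p\<^sub>n\<^sub>+\<^sub>1(y) = y\<^sup>2 (p\<^sub>n(y) - p\<^sub>n'(y))\<close>.\<close>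

fun flat_exp_poly :: "nat \<Rightarrow> real poly" where
  "flat_exp_poly 0 = [:1:]"
| "flat_exp_poly (Suc n) = [:0, 0, 1:] * (flat_exp_poly n - pderiv (flat_exp_poly n))"

definition flat_exp :: "nat \<Rightarrow> real \<Rightarrow> real" where
  "flat_exp n t = (if 0 < t then poly (flat_exp_poly n) (1 / t) * exp (- (1 / t)) else 0)"

lemma poly_times_exp_neg_tendsto_0:
  fixes q :: "real poly"
  shows "((\<lambda>t. poly q (1 / t) * exp (- (1 / t))) \<longlongrightarrow> 0) (at_right 0)"
proof -
  have "((\<lambda>y. \<Sum>k\<le>degree q. coeff q k * (y ^ k / exp y)) \<longlongrightarrow> (\<Sum>k\<le>degree q. coeff q k * 0)) at_top"
    by (intro tendsto_intros tendsto_power_div_exp_0)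
  moreover have "poly q y * exp (- y) = (\<Sum>k\<le>degree q. coeff q k * (y ^ k / exp y))" for y
    by (simp add: poly_altdef sum_distrib_right exp_minus divide_inverse mult.assoc)
  ultimately have "((\<lambda>y. poly q y * exp (- y)) \<longlongrightarrow> 0) at_top"
    by simp
  from filterlim_compose[OF this filterlim_inverse_at_top_right] show ?thesis
    by (simp add: inverse_eq_divide)
qed

lemma flat_exp_has_derivative_pos:
  assumes "0 < t"
  shows "(flat_exp n has_real_derivative flat_exp (Suc n) t) (at t)"
proof -
  let ?p = "flat_exp_poly n"
  have "((\<lambda>t. poly ?p (1 / t) * exp (- (1 / t))) has_real_derivative
      poly (pderiv ?p) (1 / t) * (- 1 / t\<^sup>2) * exp (- (1 / t)) +
      poly ?p (1 / t) * (exp (- (1 / t)) * (1 / t\<^sup>2))) (at t)"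
    using assms
    by (auto intro!: derivative_eq_intros DERIV_chain2[OF poly_DERIV] simp: power2_eq_square)
  moreover have "poly (pderiv ?p) (1 / t) * (- 1 / t\<^sup>2) * exp (- (1 / t)) +
      poly ?p (1 / t) * (exp (- (1 / t)) * (1 / t\<^sup>2)) = flat_exp (Suc n) t"
    using assms by (simp add: flat_exp_def algebra_simps power2_eq_square divide_simps)
  ultimately have "((\<lambda>t. poly ?p (1 / t) * exp (- (1 / t))) has_real_derivative
      flat_exp (Suc n) t) (at t)"
    by simp
  then show ?thesis
    by (rule has_field_derivative_transform_within_open[where S="{0<..}"])
       (use assms in \<open>auto simp: flat_exp_def\<close>)
qed

lemma flat_exp_has_derivative_0: "(flat_exp n has_real_derivative flat_exp (Suc n) 0) (at 0)"
proof -
  have "((\<lambda>y. (flat_exp n y - flat_exp n 0) / (y - 0)) \<longlongrightarrow> 0) (at 0)"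
    unfolding filterlim_at_split
  proof
    have "eventually (\<lambda>y. 0 = (flat_exp n y - flat_exp n 0) / (y - 0)) (at_left 0)"
      by (auto simp: flat_exp_def eventually_at_left_field intro: exI[of _ "-1"])
    then show "((\<lambda>y. (flat_exp n y - flat_exp n 0) / (y - 0)) \<longlongrightarrow> 0) (at_left 0)"
      by (rule Lim_transform_eventually[rotated]) simp
    have "eventually (\<lambda>y. poly ([:0,1:] * flat_exp_poly n) (1 / y) * exp (- (1 / y)) =
        (flat_exp n y - flat_exp n 0) / (y - 0)) (at_right 0)"
      by (auto simp: flat_exp_def eventually_at_right_field intro: exI[of _ "1"])
    then show "((\<lambda>y. (flat_exp n y - flat_exp n 0) / (y - 0)) \<longlongrightarrow> 0) (at_right 0)"
      by (rule Lim_transform_eventually[OF poly_times_exp_neg_tendsto_0])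
  qed
  then show ?thesis by (simp add: has_field_derivative_iff flat_exp_def)
qed

lemma derivative_chain_flat_exp: "derivative_chain flat_exp"
  unfolding derivative_chain_def
proof (intro allI)
  fix n and t :: real
  have "(flat_exp n has_real_derivative 0) (at t)" if "t < 0"
    by (rule has_field_derivative_transform_within_open[where S="{..<0}" and f="\<lambda>_. 0"])
       (use that in \<open>auto simp: flat_exp_def\<close>)
  then show "(flat_exp n has_real_derivative flat_exp (Suc n) t) (at t)"
    using flat_exp_has_derivative_pos flat_exp_has_derivative_0
    by (cases t "0::real" rule: linorder_cases) (auto simp: flat_exp_def)
qed

lemma flat_exp_0: "flat_exp 0 t = (if 0 < t then exp (- (1 / t)) else 0)"
  by (simp add: flat_exp_def)

lemma flat_exp_0_tendsto_1: "(flat_exp 0 \<longlongrightarrow> 1) at_top"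
proof -
  have "((\<lambda>t::real. exp (- inverse t)) \<longlongrightarrow> exp (- 0)) at_top"
    by real_asymp
  moreover have "eventually (\<lambda>t. exp (- inverse t) = flat_exp 0 t) at_top"
    using eventually_gt_at_top[of 0] by eventually_elim (simp add: flat_exp_0 inverse_eq_divide)
  ultimately show ?thesis by (simp add: tendsto_cong)
qed

definition box_bump :: "real^'d \<Rightarrow> real^'d \<Rightarrow> real \<Rightarrow> real^'d \<Rightarrow> real" where
  "box_bump a b k x =
    (\<Prod>i\<in>UNIV. flat_exp 0 (k * x $ i + (- k * a $ i - 1)) * flat_exp 0 ((- k) * x $ i + (k * b $ i - 1)))"

lemma smooth_fun_box_bump: "smooth_fun (box_bump a b k)"
proof -
  have coord: "smooth_fun (\<lambda>x. flat_exp 0 (c * x $ i + e))" for c e i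
    using smooth_fun_coord[OF derivative_chain_affine[OF derivative_chain_flat_exp, of c e], of i]
    by simp
  then show ?thesis
    unfolding box_bump_def[abs_def] by (intro smooth_fun_prod smooth_fun_mult coord) simp
qed

lemma box_bump_bounds: "0 \<le> box_bump a b k x" "box_bump a b k x \<le> 1"
  unfolding box_bump_def by (auto intro!: prod_nonneg prod_le_1 mult_le_one simp: flat_exp_0)

lemma box_bump_nonzero_imp:
  assumes "0 < k" "box_bump a b k x \<noteq> 0"
  shows "x \<in> cbox (\<chi> i. a $ i + 1 / k) (\<chi> i. b $ i - 1 / k)"
proof -
  have "\<forall>i. 0 < k * x $ i + (- k * a $ i - 1) \<and> 0 < (- k) * x $ i + (k * b $ i - 1)"
    using assms(2) unfolding box_bump_def by (auto simp: flat_exp_0 split: if_splits)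
  then show ?thesis
    using assms(1) by (auto simp: mem_box_cart field_simps less_imp_le)
qed

lemma cbox_shrink_subset_box:
  "0 < k \<Longrightarrow> cbox (\<chi> i. a $ i + 1 / k) (\<chi> i. b $ i - 1 / k) \<subseteq> box a (b::real^'d)"
  by (auto simp: mem_box_cart) (smt (verit) divide_pos_pos)+

lemma tsupport_box_bump:
  "0 < k \<Longrightarrow> tsupport (box_bump a b k) \<subseteq> cbox (\<chi> i. a $ i + 1 / k) (\<chi> i. b $ i - 1 / k)"
  unfolding tsupport_def by (rule closure_minimal) (use box_bump_nonzero_imp in auto)

lemma test_fun_box_bump:
  assumes "0 < k" "box a b \<subseteq> \<Omega>"
  shows "test_fun \<Omega> (box_bump a b k)"
  unfolding test_fun_def
proof (intro conjI smooth_fun_box_bump)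
  show "compact (tsupport (box_bump a b k))"
    using tsupport_box_bump[OF assms(1)]
    by (metis closed_closure compact_Int_closed compact_cbox inf.absorb2 tsupport_def)
  show "tsupport (box_bump a b k) \<subseteq> \<Omega>"
    using tsupport_box_bump[OF assms(1)] cbox_shrink_subset_box[OF assms(1)] assms(2) by blast
qed

lemma box_bump_tendsto_indicator:
  "(\<lambda>n. box_bump a b (real (Suc n)) x) \<longlonglongrightarrow> indicator (box a b) x"
proof (cases "x \<in> box a b")
  case True
  then have ab: "\<forall>i. a $ i < x $ i \<and> x $ i < b $ i" by (simp add: mem_box_cart)
  have lim: "(\<lambda>n. flat_exp 0 (real (Suc n) * c - 1)) \<longlonglongrightarrow> 1" if "0 < c" for c :: real
  proof -
    have "filterlim (\<lambda>n. real (Suc n) * c - 1) at_top sequentially"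
      using that by real_asymp
    then show ?thesis by (rule filterlim_compose[OF flat_exp_0_tendsto_1])
  qed
  have "(\<lambda>n. \<Prod>i\<in>UNIV. flat_exp 0 (real (Suc n) * (x $ i - a $ i) - 1) *
      flat_exp 0 (real (Suc n) * (b $ i - x $ i) - 1)) \<longlonglongrightarrow> (\<Prod>i\<in>(UNIV::'a set). 1 * 1)"
    by (intro tendsto_prod tendsto_mult lim) (use ab in auto)
  moreover have "box_bump a b (real (Suc n)) x = (\<Prod>i\<in>UNIV. flat_exp 0 (real (Suc n) * (x $ i - a $ i) - 1) *
      flat_exp 0 (real (Suc n) * (b $ i - x $ i) - 1))" for n
    unfolding box_bump_def by (simp add: algebra_simps)
  ultimately show ?thesis using True by simp
next
  case False
  have "box_bump a b (real (Suc n)) x = 0" for n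
    using box_bump_nonzero_imp[of "real (Suc n)" a b x] cbox_shrink_subset_box[of "real (Suc n)" a b] False
    by auto
  then show ?thesis using False by simp
qed

section \<open>Test functions and integration by parts\<close>

lemma nonzero_in_tsupport: "f x \<noteq> 0 \<Longrightarrow> x \<in> tsupport f"
  unfolding tsupport_def using closure_subset[of "{x. f x \<noteq> 0}"] by auto

lemma tsupport_subset: "closed S \<Longrightarrow> (\<And>x. f x \<noteq> 0 \<Longrightarrow> x \<in> S) \<Longrightarrow> tsupport f \<subseteq> S"
  unfolding tsupport_def by (rule closure_minimal) auto

lemma tsupport_mult_subset: "tsupport (\<lambda>x. f x * g x) \<subseteq> tsupport f"
  by (rule tsupport_subset) (simp_all add: tsupport_def nonzero_in_tsupport[unfolded tsupport_def])

lemma tsupport_add_subset: "tsupport (\<lambda>x. f x + g x) \<subseteq> tsupport f \<union> tsupport g"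
proof (rule tsupport_subset)
  fix x assume "f x + g x \<noteq> 0"
  then have "f x \<noteq> 0 \<or> g x \<noteq> 0" by auto
  then show "x \<in> tsupport f \<union> tsupport g" using nonzero_in_tsupport by blast
qed (simp add: tsupport_def closed_Un)

lemma compact_tsupport_subset:
  assumes "compact K" "tsupport f \<subseteq> K"
  shows "compact (tsupport f)"
proof -
  have "closed (tsupport f)" by (simp add: tsupport_def)
  then show ?thesis using compact_Int_closed[OF assms(1)] assms(2) by (metis inf.absorb2)
qed

lemma continuous_compact_support_bounded:
  assumes "continuous_on UNIV f" "compact (tsupport f)"
  obtains B where "\<And>x. \<bar>f x\<bar> \<le> B"
proof -
  have "compact (f ` tsupport f)"
    by (rule compact_continuous_image) (use assms continuous_on_subset in blast)+
  then obtain B where "\<forall>y\<in>f ` tsupport f. \<bar>y\<bar> \<le> B"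
    using compact_imp_bounded bounded_iff real_norm_def by metis
  then have "\<bar>f x\<bar> \<le> max B 0" for x
    using nonzero_in_tsupport[of f x] by (cases "f x = 0") auto
  then show thesis by (rule that)
qed

lemma integrable_continuous_compact_support:
  fixes f :: "real^'d \<Rightarrow> real"
  assumes "continuous_on UNIV f" "compact (tsupport f)"
  shows "integrable lborel f"
proof -
  have "integrable lborel (\<lambda>x. indicator (tsupport f) x *\<^sub>R f x)"
    by (rule borel_integrable_compact[OF assms(2)]) (use assms(1) continuous_on_subset in blast)
  moreover have "(\<lambda>x. indicator (tsupport f) x *\<^sub>R f x) = f"
    using nonzero_in_tsupport[of f] by (auto simp: indicator_def fun_eq_iff)
  ultimately show ?thesis by simp
qed

lemma cpartial_eq_0_outside_tsupport:
  assumes "x \<notin> tsupport f"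
  shows "cpartial j f x = 0"
proof -
  have "open (- tsupport f)" unfolding tsupport_def by (intro open_Compl closed_closure)
  then obtain e where e: "e > 0" "ball x e \<subseteq> - tsupport f"
    using assms by (meson ComplI open_contains_ball)
  have zero: "f (x + t *\<^sub>R axis j 1) = 0" if "t \<in> ball 0 e" for t
  proof -
    have "x + t *\<^sub>R axis j 1 \<in> ball x e" using that by (simp add: dist_norm)
    then show ?thesis using e(2) nonzero_in_tsupport[of f] by blast
  qed
  have "((\<lambda>t. 0) has_real_derivative 0) (at 0)" by simp
  then have "((\<lambda>t. f (x + t *\<^sub>R axis j 1)) has_real_derivative 0) (at 0)"
    by (rule has_field_derivative_transform_within_open[where S="ball 0 e"]) (use e zero in auto)
  then show ?thesis by (rule cpartial_eqI)
qed

lemma tsupport_cpartial: "tsupport (cpartial j f) \<subseteq> tsupport f"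
  by (rule tsupport_subset) (auto simp: tsupport_def intro: ccontr cpartial_eq_0_outside_tsupport)

lemma test_fun_continuous: "test_fun \<Omega> \<phi> \<Longrightarrow> continuous_on UNIV \<phi>"
  unfolding test_fun_def by (blast intro: smooth_fun_continuous)

lemma borel_measurable_lebesgue_onI:
  "f \<in> borel_measurable borel \<Longrightarrow> f \<in> borel_measurable (lebesgue_on S)"
  by (rule measurable_restrict_space1, rule measurable_completion) simp

lemma test_fun_measurable: "test_fun \<Omega> \<phi> \<Longrightarrow> \<phi> \<in> borel_measurable (lebesgue_on S)"
  by (intro borel_measurable_lebesgue_onI borel_measurable_continuous_onI test_fun_continuous)

lemma test_fun_cpartial: "test_fun \<Omega> \<phi> \<Longrightarrow> test_fun \<Omega> (cpartial j \<phi>)"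
  using tsupport_cpartial[of j \<phi>] compact_tsupport_subset[of "tsupport \<phi>" "cpartial j \<phi>"]
  unfolding test_fun_def by (auto intro: smooth_fun_cpartial)

lemma test_fun_mult: "test_fun \<Omega> \<phi> \<Longrightarrow> smooth_fun \<psi> \<Longrightarrow> test_fun \<Omega> (\<lambda>x. \<phi> x * \<psi> x)"
  using tsupport_mult_subset[of \<phi> \<psi>] compact_tsupport_subset[of "tsupport \<phi>" "\<lambda>x. \<phi> x * \<psi> x"]
  unfolding test_fun_def by (auto intro: smooth_fun_mult)

lemma test_fun_cmult: "test_fun \<Omega> \<phi> \<Longrightarrow> test_fun \<Omega> (\<lambda>x. c * \<phi> x)"
  using test_fun_mult[OF _ smooth_fun_const[of c]] by (simp add: mult.commute)

lemma test_fun_add: "test_fun \<Omega> \<phi> \<Longrightarrow> test_fun \<Omega> \<psi> \<Longrightarrow> test_fun \<Omega> (\<lambda>x. \<phi> x + \<psi> x)"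
  using tsupport_add_subset[of \<phi> \<psi>]
    compact_tsupport_subset[OF compact_Un, of "tsupport \<phi>" "tsupport \<psi>" "\<lambda>x. \<phi> x + \<psi> x"]
  unfolding test_fun_def by (auto intro: smooth_fun_add)

lemma lborel_integral_translate:
  fixes f :: "'a::euclidean_space \<Rightarrow> real"
  assumes "f \<in> borel_measurable borel"
  shows "integral\<^sup>L lborel (\<lambda>x. f (x + c)) = integral\<^sup>L lborel f"
proof -
  have "integral\<^sup>L lborel (\<lambda>x. f (c + x)) = integral\<^sup>L (distr lborel borel ((+) c)) f"
    by (rule integral_distr[symmetric]) (use assms in auto)
  then show ?thesis by (simp add: lborel_distr_plus add.commute)
qed

lemma lborel_integrable_translate:
  fixes f :: "'a::euclidean_space \<Rightarrow> real"
  assumes "f \<in> borel_measurable borel" "integrable lborel f"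
  shows "integrable lborel (\<lambda>x. f (x + c))"
proof -
  have "integrable (distr lborel borel ((+) c)) f" using assms(2) by (simp add: lborel_distr_plus)
  then show ?thesis by (subst (asm) integrable_distr_eq) (use assms(1) in \<open>auto simp: add.commute\<close>)
qed

lemma difference_quotient_dominated:
  assumes "axis_differentiable f" "\<And>y. \<bar>cpartial j f y\<bar> \<le> M" "\<And>y. f y \<noteq> 0 \<Longrightarrow> norm y \<le> r"
    and "0 < h" "h \<le> 1"
  shows "\<bar>(f (x + h *\<^sub>R axis j 1) - f x) / h\<bar> \<le> M * indicator (cball 0 (r + 1)) x"
proof (cases "x \<in> cball 0 (r + 1)")
  case True
  have "\<exists>z>0. z < h \<and> f (x + h *\<^sub>R axis j 1) - f (x + 0 *\<^sub>R axis j 1) =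
      (h - 0) * cpartial j f (x + z *\<^sub>R axis j 1)"
    by (rule MVT2[OF assms(4)]) (use axis_differentiable_has_derivative_at[OF assms(1)] in auto)
  then obtain z where "f (x + h *\<^sub>R axis j 1) - f x = h * cpartial j f (x + z *\<^sub>R axis j 1)"
    by auto
  then show ?thesis using True assms(2,4) by simp
next
  case False
  have "norm (h *\<^sub>R axis j (1::real)) \<le> 1" using assms(4,5) by simp
  then have "r < norm (x + h *\<^sub>R axis j 1)"
    using False norm_triangle_ineq2[of x "- (h *\<^sub>R axis j 1)"] by simp
  then show ?thesis using False assms(3)[of x] assms(3)[of "x + h *\<^sub>R axis j 1"] by force
qed

text \<open>The integral of the difference quotient vanishes by translation invariance, and it
  converges to the integral of the partial derivative by dominated convergence.\<close>

lemma integral_cpartial_eq_0: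
  fixes f :: "real^'d \<Rightarrow> real"
  assumes f: "smooth_fun f" and K: "compact (tsupport f)"
  shows "integral\<^sup>L lborel (cpartial j f) = 0"
proof -
  define e :: "real^'d" where "e = axis j 1"
  define h where "h n = inverse (real (Suc n))" for n
  define Q where "Q n x = (f (x + h n *\<^sub>R e) - f x) / h n" for n x
  have h: "0 < h n" "h n \<le> 1" for n by (auto simp: h_def field_simps)
  have fc: "continuous_on UNIV f" by (rule smooth_fun_continuous[OF f])
  have fm: "f \<in> borel_measurable borel" by (rule borel_measurable_continuous_onI[OF fc])
  have dfc: "continuous_on UNIV (cpartial j f)"
    by (rule smooth_fun_continuous[OF smooth_fun_cpartial[OF f]])
  obtain M where M: "\<And>x. \<bar>cpartial j f x\<bar> \<le> M"
    using continuous_compact_support_bounded[OF dfc compact_tsupport_subset[OF K tsupport_cpartial]]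
    by blast
  obtain r where r: "\<And>x. f x \<noteq> 0 \<Longrightarrow> norm x \<le> r"
    using compact_imp_bounded[OF K] nonzero_in_tsupport unfolding bounded_pos by metis
  have "integral\<^sup>L lborel (Q n) = 0" for n
    using lborel_integral_translate[OF fm, of "h n *\<^sub>R e"]
      Bochner_Integration.integral_diff[OF lborel_integrable_translate[OF fm] integrable_continuous_compact_support[OF fc K]]
    unfolding Q_def by (simp add: integrable_continuous_compact_support[OF fc K])
  moreover have "(\<lambda>n. integral\<^sup>L lborel (Q n)) \<longlonglongrightarrow> integral\<^sup>L lborel (cpartial j f)"
  proof (rule integral_dominated_convergence[where w="\<lambda>x. M * indicator (cball 0 (r + 1)) x"])
    show "cpartial j f \<in> borel_measurable lborel"
      using borel_measurable_continuous_onI[OF dfc] by simp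
    show "Q n \<in> borel_measurable lborel" for n
      unfolding Q_def[abs_def] using fm by measurable
    show "integrable lborel (\<lambda>x. M * indicator (cball 0 (r + 1)) x)"
      using borel_integrable_compact[of "cball 0 (r + 1)" "\<lambda>_. M"] by (simp add: mult.commute)
    show "AE x in lborel. (\<lambda>n. Q n x) \<longlonglongrightarrow> cpartial j f x"
    proof (rule AE_I2)
      fix x
      have "((\<lambda>t. (f (x + t *\<^sub>R e) - f x) / (t - 0)) \<longlongrightarrow> cpartial j f x) (at 0)"
        using axis_differentiable_has_derivative[OF smooth_fun_axis_differentiable[OF f], of x j]
        unfolding has_field_derivative_iff e_def by simp
      moreover have "filterlim h (at 0) sequentially"
        unfolding h_def[abs_def] by (rule filterlim_atI[OF LIMSEQ_inverse_real_of_nat]) simp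
      ultimately show "(\<lambda>n. Q n x) \<longlonglongrightarrow> cpartial j f x"
        unfolding Q_def using filterlim_compose by fastforce
    qed
    show "AE x in lborel. norm (Q n x) \<le> M * indicator (cball 0 (r + 1)) x" for n
      using difference_quotient_dominated[OF smooth_fun_axis_differentiable[OF f] M r h]
      by (intro AE_I2) (simp add: Q_def e_def)
  qed
  ultimately have "(\<lambda>n. 0) \<longlonglongrightarrow> integral\<^sup>L lborel (cpartial j f)" by simp
  then show ?thesis by (rule LIMSEQ_unique[OF tendsto_const, symmetric])
qed

lemma integral_lebesgue_on_test_fun:
  assumes "\<Omega> \<in> sets lebesgue" "test_fun \<Omega> g"
  shows "integral\<^sup>L (lebesgue_on \<Omega>) g = integral\<^sup>L lborel g"
proof -
  have "integral\<^sup>L (lebesgue_on \<Omega>) g = integral\<^sup>L lebesgue (\<lambda>x. indicator \<Omega> x *\<^sub>R g x)"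
    using integral_restrict_space[of \<Omega> lebesgue g] assms(1) by simp
  also have "\<dots> = integral\<^sup>L lebesgue g"
    using assms(2) nonzero_in_tsupport[of g] unfolding test_fun_def
    by (intro Bochner_Integration.integral_cong) (auto simp: indicator_def)
  also have "\<dots> = integral\<^sup>L lborel g"
    using borel_measurable_continuous_onI[OF test_fun_continuous[OF assms(2)]]
    by (intro integral_completion) simp
  finally show ?thesis .
qed

lemma test_fun_integration_by_parts:
  assumes \<Omega>: "\<Omega> \<in> sets lebesgue" and p: "test_fun \<Omega> p" and \<phi>: "test_fun \<Omega> \<phi>"
  shows "integral\<^sup>L (lebesgue_on \<Omega>) (\<lambda>x. p x * cpartial j \<phi> x) =
    - integral\<^sup>L (lebesgue_on \<Omega>) (\<lambda>x. cpartial j p x * \<phi> x)"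
proof -
  have s: "smooth_fun p" "smooth_fun \<phi>" using p \<phi> by (auto simp: test_fun_def)
  have A: "test_fun \<Omega> (\<lambda>x. cpartial j p x * \<phi> x)"
    by (rule test_fun_mult[OF test_fun_cpartial[OF p] s(2)])
  have B: "test_fun \<Omega> (\<lambda>x. p x * cpartial j \<phi> x)"
    by (rule test_fun_mult[OF p smooth_fun_cpartial[OF s(2)]])
  have "integral\<^sup>L lborel (cpartial j (\<lambda>x. p x * \<phi> x)) = 0"
    using test_fun_mult[OF p s(2)] by (intro integral_cpartial_eq_0) (auto simp: test_fun_def)
  then have "integral\<^sup>L lborel (\<lambda>x. cpartial j p x * \<phi> x + p x * cpartial j \<phi> x) = 0"
    by (simp add: cpartial_mult smooth_fun_axis_differentiable s)
  moreover have "integrable lborel (\<lambda>x. cpartial j p x * \<phi> x)"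
    "integrable lborel (\<lambda>x. p x * cpartial j \<phi> x)"
    using A B by (auto intro!: integrable_continuous_compact_support test_fun_continuous
        simp: test_fun_def)
  ultimately show ?thesis
    using integral_lebesgue_on_test_fun[OF \<Omega> A] integral_lebesgue_on_test_fun[OF \<Omega> B] by simp
qed

section \<open>The fundamental lemma of the calculus of variations\<close>

lemma set_integral_box_eq_0_if_orthogonal_to_test_funs:
  fixes f :: "real^'d \<Rightarrow> 'b::{banach, second_countable_topology}"
  assumes f: "integrable (lebesgue_on \<Omega>) f"
    and orth: "\<And>\<phi>. test_fun \<Omega> \<phi> \<Longrightarrow> (LINT x|lebesgue_on \<Omega>. \<phi> x *\<^sub>R f x) = 0"
    and "box a b \<subseteq> \<Omega>"
  shows "(LINT x:box a b|lebesgue_on \<Omega>. f x) = 0"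
proof -
  have bump: "test_fun \<Omega> (box_bump a b (real (Suc n)))" for n
    by (rule test_fun_box_bump) (use assms(3) in auto)
  have "(\<lambda>n. LINT x|lebesgue_on \<Omega>. box_bump a b (real (Suc n)) x *\<^sub>R f x)
      \<longlonglongrightarrow> (LINT x:box a b|lebesgue_on \<Omega>. f x)"
    unfolding set_lebesgue_integral_def
  proof (rule integral_dominated_convergence[where w="\<lambda>x. norm (f x)"])
    show "(\<lambda>x. indicator (box a b) x *\<^sub>R f x) \<in> borel_measurable (lebesgue_on \<Omega>)"
      by (rule borel_measurable_scaleR[OF borel_measurable_lebesgue_onI borel_measurable_integrable[OF f]])
        (intro borel_measurable_indicator borel_open open_box)
    show "(\<lambda>x. box_bump a b (real (Suc n)) x *\<^sub>R f x) \<in> borel_measurable (lebesgue_on \<Omega>)" for n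
      using f test_fun_measurable[OF bump] by (intro borel_measurable_scaleR) auto
    show "integrable (lebesgue_on \<Omega>) (\<lambda>x. norm (f x))" using f by auto
    show "AE x in lebesgue_on \<Omega>. (\<lambda>n. box_bump a b (real (Suc n)) x *\<^sub>R f x)
        \<longlonglongrightarrow> indicator (box a b) x *\<^sub>R f x"
      by (intro AE_I2 tendsto_scaleR tendsto_const box_bump_tendsto_indicator)
    show "AE x in lebesgue_on \<Omega>. norm (box_bump a b (real (Suc n)) x *\<^sub>R f x) \<le> norm (f x)" for n
      using box_bump_bounds[of a b "real (Suc n)"] by (intro AE_I2) (simp add: mult_left_le_one_le)
  qed
  then have "(\<lambda>n. 0) \<longlonglongrightarrow> (LINT x:box a b|lebesgue_on \<Omega>. f x)" using orth[OF bump] by simp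
  then show ?thesis by (rule LIMSEQ_unique[OF tendsto_const, symmetric])
qed

lemma box_Int_box_cart:
  fixes a b c d :: "real^'d"
  shows "box a b \<inter> box c d = box (\<chi> i. max (a$i) (c$i)) (\<chi> i. min (b$i) (d$i))"
  by (auto simp: mem_box_cart)

lemma set_integral_UNIV_eq_0_if_box_integrals_eq_0:
  fixes g :: "real^'d \<Rightarrow> 'b::{banach, second_countable_topology}"
  assumes g: "integrable lebesgue g" and box: "\<And>a b. (LINT x:box a b|lebesgue. g x) = 0"
  shows "integral\<^sup>L lebesgue g = 0"
proof -
  define B where "B i = box (- (real i *\<^sub>R One)) (real i *\<^sub>R One :: real^'d)" for i
  have "incseq B"
    unfolding B_def incseq_def by (intro allI impI subset_box_imp(4)) (auto simp: inner_sum_Basis)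
  have "B i \<in> sets lebesgue" for i
    by (simp add: B_def sets_completionI_sets borel_open)
  with \<open>incseq B\<close> g
  have "(\<lambda>i. LINT x:B i|lebesgue. g x) \<longlonglongrightarrow> (LINT x:(\<Union>i. B i)|lebesgue. g x)"
    by (intro set_integral_cont_up) (auto simp: set_integrable_def integrable_mult_indicator)
  moreover have "(\<Union>i. B i) = UNIV"
    unfolding B_def by (rule UN_box_eq_UNIV)
  moreover have "(LINT x:B i|lebesgue. g x) = 0" for i
    unfolding B_def by (rule box)
  ultimately have "(\<lambda>i. 0) \<longlonglongrightarrow> integral\<^sup>L lebesgue g"
    by (simp add: set_lebesgue_integral_def)
  then show ?thesis by (rule LIMSEQ_unique[OF tendsto_const, symmetric])
qed

lemma sigma_finite_lebesgue: "sigma_finite_measure (lebesgue :: 'a::euclidean_space measure)"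
proof
  let ?C = "range (\<lambda>n::nat. cbox (- (real n *\<^sub>R One)) (real n *\<^sub>R One :: 'a))"
  have "x \<in> \<Union>?C" for x
  proof -
    have "x \<in> (\<Union>n::nat. box (- (real n *\<^sub>R One)) (real n *\<^sub>R One))"
      by (simp only: UN_box_eq_UNIV UNIV_I)
    then obtain n :: nat where "x \<in> box (- (real n *\<^sub>R One)) (real n *\<^sub>R One)"
      by blast
    then show ?thesis using box_subset_cbox by fast
  qed
  then have "\<Union>?C = UNIV" by blast
  moreover have "?C \<subseteq> sets lebesgue" "\<forall>C\<in>?C. emeasure lebesgue C \<noteq> \<infinity>"
    using fmeasurableD[OF lmeasurable_cbox] fmeasurableD2[OF lmeasurable_cbox]
    by (auto simp: infinity_ennreal_def)
  ultimately show "\<exists>A::'a set set. countable A \<and> A \<subseteq> sets lebesgue \<and> \<Union>A = space lebesgue \<and>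
      (\<forall>a\<in>A. emeasure lebesgue a \<noteq> \<infinity>)"
    by (intro exI[of _ ?C]) auto
qed

lemma sets_borel_eq_sigma_sets_boxes:
  "sets borel = sigma_sets UNIV (range (\<lambda>(a, b). box a (b::'a::euclidean_space)))"
proof -
  have "sets borel = sets (sigma UNIV (range (\<lambda>(a, b). box a (b::'a))))"
    using borel_eq_box by metis
  also have "\<dots> = sigma_sets UNIV (range (\<lambda>(a, b). box a (b::'a)))"
    by (rule sets_measure_of) auto
  finally show ?thesis .
qed

lemma Int_stable_boxes_cart: "Int_stable (range (\<lambda>(a, b). box a (b::real^'d)))"
proof (unfold Int_stable_def, safe)
  fix a b c d :: "real^'d"
  show "box a b \<inter> box c d \<in> range (\<lambda>(a, b). box a b)"
    unfolding box_Int_box_cart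
    by (rule image_eqI[where x="((\<chi> i. max (a$i) (c$i)), (\<chi> i. min (b$i) (d$i)))"]) auto
qed

text \<open>Boxes form an \<open>\<inter>\<close>-stable generator of the Borel sets, so a Dynkin argument extends
  the vanishing of the set integrals from boxes to all Borel sets.\<close>

lemma set_integral_borel_eq_0_if_box_integrals_eq_0:
  fixes g :: "real^'d \<Rightarrow> 'b::{banach, second_countable_topology}"
  assumes g: "integrable lebesgue g" and box: "\<And>a b. (LINT x:box a b|lebesgue. g x) = 0"
    and "A \<in> sets borel"
  shows "(LINT x:A|lebesgue. g x) = 0"
proof -
  let ?boxes = "range (\<lambda>(a, b). box a (b::real^'d))"
  have lebesgue: "B \<in> sets lebesgue" if "B \<in> sigma_sets UNIV ?boxes" for B
    using that sets_borel_eq_sigma_sets_boxes by (metis sets_completionI_sets sets_lborel)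
  have pow: "?boxes \<subseteq> Pow UNIV" by simp
  have "A \<in> sigma_sets UNIV ?boxes" using assms(3) sets_borel_eq_sigma_sets_boxes by blast
  with Int_stable_boxes_cart[where 'd='d] pow show ?thesis
  proof (induction rule: sigma_sets_induct_disjoint)
    case (basic A) then show ?case using box by auto
  next
    case (compl A)
    have "(LINT x:UNIV - A|lebesgue. g x) = (LINT x|lebesgue. g x - indicator A x *\<^sub>R g x)"
      unfolding set_lebesgue_integral_def
      by (intro Bochner_Integration.integral_cong) (auto simp: indicator_def)
    also have "\<dots> = integral\<^sup>L lebesgue g - (LINT x:A|lebesgue. g x)"
      unfolding set_lebesgue_integral_def
      by (rule Bochner_Integration.integral_diff[OF g integrable_mult_indicator[OF lebesgue[OF compl(1)] g]])
    finally show ?case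
      using compl set_integral_UNIV_eq_0_if_box_integrals_eq_0[OF g box] by simp
  next
    case (union A)
    have "A i \<in> sets lebesgue" for i using union(2) lebesgue by blast
    then have "(LINT x:(\<Union>i. A i)|lebesgue. g x) = (\<Sum>i. (LINT x:(A i)|lebesgue. g x))"
      using union(1) g
      by (intro lebesgue_integral_countable_add)
         (auto simp: disjoint_family_on_def set_integrable_def intro!: integrable_mult_indicator)
    then show ?case using union by simp
  qed (simp add: set_lebesgue_integral_def)
qed

lemma AE_eq_0_if_box_integrals_eq_0:
  fixes g :: "real^'d \<Rightarrow> 'b::{banach, second_countable_topology}"
  assumes g: "integrable lebesgue g" and box: "\<And>a b. (LINT x:box a b|lebesgue. g x) = 0"
  shows "AE x in lebesgue. g x = 0"
proof (rule sigma_finite_measure.density_zero[OF sigma_finite_lebesgue g])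
  fix A :: "(real^'d) set" assume "A \<in> sets lebesgue"
  then obtain S N N' where A: "A = S \<union> N" "N \<subseteq> N'" "N' \<in> null_sets lborel" "S \<in> sets lborel"
    by (auto simp: sets_completion)
  have "(LINT x:A|lebesgue. g x) = (LINT x:S|lebesgue. g x)"
    unfolding set_lebesgue_integral_def
  proof (rule integral_cong_AE)
    show "AE x in lebesgue. indicator A x *\<^sub>R g x = indicator S x *\<^sub>R g x"
      using AE_completion[OF AE_not_in[OF A(3)]] by eventually_elim (use A in \<open>auto simp: indicator_def\<close>)
  qed (use g \<open>A \<in> sets lebesgue\<close> A(4) in \<open>auto intro!: borel_measurable_integrable
      integrable_mult_indicator sets_completionI_sets\<close>)
  then show "(LINT x:A|lebesgue. g x) = 0"
    using set_integral_borel_eq_0_if_box_integrals_eq_0[OF g box] A(4) by simp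
qed

lemma AE_eq_0_on_box_if_orthogonal_to_test_funs:
  fixes f :: "real^'d \<Rightarrow> 'b::{banach, second_countable_topology}"
  assumes \<Omega>: "\<Omega> \<in> sets lebesgue" and f: "integrable (lebesgue_on \<Omega>) f"
    and orth: "\<And>\<phi>. test_fun \<Omega> \<phi> \<Longrightarrow> (LINT x|lebesgue_on \<Omega>. \<phi> x *\<^sub>R f x) = 0"
    and sub: "box c d \<subseteq> \<Omega>"
  shows "AE x in lebesgue. x \<in> box c d \<longrightarrow> f x = 0"
proof -
  define g where "g x = indicator (box c d) x *\<^sub>R f x" for x
  have box_sets: "box c d \<in> sets lebesgue" by (simp add: sets_completionI_sets borel_open)
  have "\<Omega> \<inter> space lebesgue \<in> sets lebesgue" using \<Omega> by simp
  from integrable_restrict_space[OF this, of f] f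
  have "integrable lebesgue (\<lambda>x. indicator \<Omega> x *\<^sub>R f x)" by simp
  then have "integrable lebesgue (\<lambda>x. indicator (box c d) x *\<^sub>R (indicator \<Omega> x *\<^sub>R f x))"
    by (rule integrable_mult_indicator[OF box_sets])
  moreover have "(\<lambda>x. indicator (box c d) x *\<^sub>R (indicator \<Omega> x *\<^sub>R f x)) = g"
    using sub by (auto simp: g_def indicator_def fun_eq_iff)
  ultimately have g: "integrable lebesgue g" by simp
  have "(LINT x:box a b|lebesgue. g x) = 0" for a b
  proof -
    have "(LINT x:box a b|lebesgue. g x) = (LINT x:box a b \<inter> box c d|lebesgue_on \<Omega>. f x)"
      using \<Omega> sub unfolding g_def set_lebesgue_integral_def
      by (subst integral_restrict_space) (auto intro!: Bochner_Integration.integral_cong simp: indicator_def)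
    also have "\<dots> = 0"
      unfolding box_Int_box_cart
      by (rule set_integral_box_eq_0_if_orthogonal_to_test_funs[OF f orth])
         (use sub box_Int_box_cart in blast)+
    finally show ?thesis .
  qed
  from AE_eq_0_if_box_integrals_eq_0[OF g this] show ?thesis
    by eventually_elim (auto simp: g_def)
qed

lemma AE_eq_0_if_orthogonal_to_test_funs:
  fixes f :: "real^'d \<Rightarrow> 'b::{banach, second_countable_topology}"
  assumes \<Omega>: "open \<Omega>" and f: "integrable (lebesgue_on \<Omega>) f"
    and orth: "\<And>\<phi>. test_fun \<Omega> \<phi> \<Longrightarrow> (LINT x|lebesgue_on \<Omega>. \<phi> x *\<^sub>R f x) = 0"
  shows "AE x in lebesgue_on \<Omega>. f x = 0"
proof -
  have \<Omega>s: "\<Omega> \<in> sets lebesgue" using \<Omega> by (simp add: sets_completionI_sets borel_open)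
  note on_box = AE_eq_0_on_box_if_orthogonal_to_test_funs[OF \<Omega>s f orth]
  obtain D where D: "countable D" "\<And>X. X \<in> D \<Longrightarrow> \<exists>a b. X = box a b \<and> X \<subseteq> \<Omega>" "\<Union>D = \<Omega>"
    using open_countable_Union_open_box[OF \<Omega>] by (metis PowD subsetD)
  have "AE x in lebesgue. \<forall>X\<in>D. x \<in> X \<longrightarrow> f x = 0"
    using D(2) on_box by (subst AE_ball_countable[OF D(1)]) blast
  then have "AE x in lebesgue. x \<in> \<Omega> \<longrightarrow> f x = 0"
    by eventually_elim (use D(3) in auto)
  then show ?thesis using AE_restrict_space_iff[of \<Omega> lebesgue] \<Omega>s by simp
qed

section \<open>Square integrable functions and weak derivatives\<close>

lemma borel_measurable_cnj [measurable]:
  "f \<in> borel_measurable M \<Longrightarrow> (\<lambda>x. cnj (f x)) \<in> borel_measurable M"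
  by (rule borel_measurable_continuous_on[where f=cnj]) (auto intro: continuous_intros)

lemma cmod_lincomb_square_le:
  "(cmod (a * x + b * y))\<^sup>2 \<le> 2 * (cmod a)\<^sup>2 * (cmod x)\<^sup>2 + 2 * (cmod b)\<^sup>2 * (cmod y)\<^sup>2"
proof -
  have "(cmod (a * x + b * y))\<^sup>2 \<le> (cmod a * cmod x + cmod b * cmod y)\<^sup>2"
    using norm_triangle_ineq[of "a * x" "b * y"] by (simp add: power_mono norm_mult)
  also have "\<dots> \<le> 2 * (cmod a * cmod x)\<^sup>2 + 2 * (cmod b * cmod y)\<^sup>2"
    using sum_squares_bound[of "cmod a * cmod x" "cmod b * cmod y"] by (simp add: power2_sum)
  finally show ?thesis by (simp add: power_mult_distrib)
qed

lemma L2_measurable: "L2 \<Omega> f \<Longrightarrow> f \<in> borel_measurable (lebesgue_on \<Omega>)"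
  and L2_square_integrable: "L2 \<Omega> f \<Longrightarrow> integrable (lebesgue_on \<Omega>) (\<lambda>x. (cmod (f x))\<^sup>2)"
  unfolding L2_def by blast+

lemma L2_lincomb:
  assumes f: "L2 \<Omega> f" and g: "L2 \<Omega> g"
  shows "L2 \<Omega> (\<lambda>x. a * f x + b * g x)"
  unfolding L2_def
proof
  show m: "(\<lambda>x. a * f x + b * g x) \<in> borel_measurable (lebesgue_on \<Omega>)"
    using L2_measurable[OF f] L2_measurable[OF g] by measurable
  have "integrable (lebesgue_on \<Omega>) (\<lambda>x. 2 * (cmod a)\<^sup>2 * (cmod (f x))\<^sup>2 + 2 * (cmod b)\<^sup>2 * (cmod (g x))\<^sup>2)"
    using L2_square_integrable[OF f] L2_square_integrable[OF g] by simp
  then show "integrable (lebesgue_on \<Omega>) (\<lambda>x. (cmod (a * f x + b * g x))\<^sup>2)"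
    by (rule Bochner_Integration.integrable_bound) (use m in \<open>auto intro!: AE_I2 cmod_lincomb_square_le\<close>)
qed

lemma L2_sum: "finite S \<Longrightarrow> (\<And>i. i \<in> S \<Longrightarrow> L2 \<Omega> (f i)) \<Longrightarrow> L2 \<Omega> (\<lambda>x. \<Sum>i\<in>S. f i x)"
proof (induction S rule: finite_induct)
  case empty then show ?case by (simp add: L2_def)
next
  case (insert a S)
  then show ?case using L2_lincomb[of \<Omega> "f a" "\<lambda>x. \<Sum>i\<in>S. f i x" 1 1] by simp
qed

lemma L2_integrable_mult_cnj:
  assumes f: "L2 \<Omega> f" and g: "L2 \<Omega> g"
  shows "integrable (lebesgue_on \<Omega>) (\<lambda>x. f x * cnj (g x))"
proof -
  have int: "integrable (lebesgue_on \<Omega>) (\<lambda>x. (cmod (f x))\<^sup>2 + (cmod (g x))\<^sup>2)"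
    using L2_square_integrable[OF f] L2_square_integrable[OF g] by simp
  have meas: "(\<lambda>x. f x * cnj (g x)) \<in> borel_measurable (lebesgue_on \<Omega>)"
    using L2_measurable[OF f] L2_measurable[OF g] by measurable
  have "norm (f x * cnj (g x)) \<le> norm ((cmod (f x))\<^sup>2 + (cmod (g x))\<^sup>2)" for x
  proof -
    have "cmod (f x) * cmod (g x) \<le> (cmod (f x))\<^sup>2 + (cmod (g x))\<^sup>2"
      using sum_squares_bound[of "cmod (f x)" "cmod (g x)"]
        mult_nonneg_nonneg[OF norm_ge_zero norm_ge_zero, of "f x" "g x"] by linarith
    then show ?thesis by (simp add: norm_mult)
  qed
  then show ?thesis by (intro Bochner_Integration.integrable_bound[OF int meas] AE_I2)
qed

lemma sL2ip_lincomb_left: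
  assumes "L2 \<Omega> f" "L2 \<Omega> g" "L2 \<Omega> h"
  shows "sL2ip \<Omega> (\<lambda>x. a * f x + b * g x) h = a * sL2ip \<Omega> f h + b * sL2ip \<Omega> g h"
proof -
  have "sL2ip \<Omega> (\<lambda>x. a * f x + b * g x) h =
      (LINT x|lebesgue_on \<Omega>. a * (f x * cnj (h x)) + b * (g x * cnj (h x)))"
    unfolding sL2ip_def by (simp add: algebra_simps)
  also have "\<dots> = (LINT x|lebesgue_on \<Omega>. a * (f x * cnj (h x))) +
      (LINT x|lebesgue_on \<Omega>. b * (g x * cnj (h x)))"
    using L2_integrable_mult_cnj[OF assms(1,3)] L2_integrable_mult_cnj[OF assms(2,3)]
    by (intro Bochner_Integration.integral_add) auto
  finally show ?thesis unfolding sL2ip_def by simp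
qed

lemma sL2ip_swap: "sL2ip \<Omega> g f = cnj (sL2ip \<Omega> f g)"
proof -
  have "sL2ip \<Omega> g f = (LINT x|lebesgue_on \<Omega>. cnj (f x * cnj (g x)))"
    unfolding sL2ip_def by (rule Bochner_Integration.integral_cong) (auto simp: mult.commute)
  also have "\<dots> = cnj (sL2ip \<Omega> f g)"
    unfolding sL2ip_def by (rule Bochner_Integration.integral_cnj)
  finally show ?thesis .
qed

lemma sL2ip_self: "sL2ip \<Omega> f f = of_real (LINT x|lebesgue_on \<Omega>. (cmod (f x))\<^sup>2)"
  unfolding sL2ip_def by (simp only: integral_complex_of_real[symmetric] complex_norm_square)

lemma sL2ip_self_nonneg: "0 \<le> Re (sL2ip \<Omega> f f)"
  unfolding sL2ip_self by simp

lemma sL2ip_cong_AE: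
  assumes "AE x in lebesgue_on \<Omega>. f x = f' x" "L2 \<Omega> f" "L2 \<Omega> f'" "L2 \<Omega> g"
  shows "sL2ip \<Omega> f g = sL2ip \<Omega> f' g"
  unfolding sL2ip_def
  by (rule integral_cong_AE) (use assms in \<open>auto intro: borel_measurable_integrable L2_integrable_mult_cnj\<close>)

lemma sL2ip_self_cong_AE:
  assumes "AE x in lebesgue_on \<Omega>. f x = f' x" "L2 \<Omega> f" "L2 \<Omega> f'"
  shows "sL2ip \<Omega> f f = sL2ip \<Omega> f' f'"
proof -
  have "sL2ip \<Omega> f f = sL2ip \<Omega> f' f" by (rule sL2ip_cong_AE) (use assms in auto)
  also have "\<dots> = cnj (sL2ip \<Omega> f f')" by (rule sL2ip_swap)
  also have "sL2ip \<Omega> f f' = sL2ip \<Omega> f' f'" by (rule sL2ip_cong_AE) (use assms in auto)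
  finally show ?thesis by (simp add: sL2ip_self)
qed

lemma sL2ip_self_lincomb_le:
  assumes f: "L2 \<Omega> f" and g: "L2 \<Omega> g"
  shows "Re (sL2ip \<Omega> (\<lambda>x. a * f x + b * g x) (\<lambda>x. a * f x + b * g x))
    \<le> 2 * (cmod a)\<^sup>2 * Re (sL2ip \<Omega> f f) + 2 * (cmod b)\<^sup>2 * Re (sL2ip \<Omega> g g)"
proof -
  have "(LINT x|lebesgue_on \<Omega>. (cmod (a * f x + b * g x))\<^sup>2)
      \<le> (LINT x|lebesgue_on \<Omega>. 2 * (cmod a)\<^sup>2 * (cmod (f x))\<^sup>2 + 2 * (cmod b)\<^sup>2 * (cmod (g x))\<^sup>2)"
    using L2_square_integrable[OF L2_lincomb[OF f g]] L2_square_integrable[OF f] L2_square_integrable[OF g]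
    by (intro integral_mono cmod_lincomb_square_le) auto
  also have "\<dots> = 2 * (cmod a)\<^sup>2 * (LINT x|lebesgue_on \<Omega>. (cmod (f x))\<^sup>2) +
      2 * (cmod b)\<^sup>2 * (LINT x|lebesgue_on \<Omega>. (cmod (g x))\<^sup>2)"
    using L2_square_integrable[OF f] L2_square_integrable[OF g] by simp
  finally show ?thesis unfolding sL2ip_self by simp
qed

locale bounded_domain =
  fixes \<Omega> :: "(real^'d) set"
  assumes domain_open: "open \<Omega>" and domain_bounded: "bounded \<Omega>"
begin

lemma domain_sets: "\<Omega> \<in> sets lebesgue"
  using domain_open by (simp add: sets_completionI_sets borel_open)

lemma finite_measure_domain: "finite_measure (lebesgue_on \<Omega>)"
  by (rule finite_measure_lebesgue_on, rule bounded_set_imp_lmeasurable[OF domain_bounded domain_sets])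

lemma L2_integrable: "L2 \<Omega> f \<Longrightarrow> integrable (lebesgue_on \<Omega>) f"
proof -
  assume f: "L2 \<Omega> f"
  have int: "integrable (lebesgue_on \<Omega>) (\<lambda>x. 1 + (cmod (f x))\<^sup>2)"
    by (intro Bochner_Integration.integrable_add finite_measure.integrable_const[OF finite_measure_domain]
        L2_square_integrable[OF f])
  have "norm (f x) \<le> norm (1 + (cmod (f x))\<^sup>2)" for x
  proof -
    have "2 * cmod (f x) \<le> (cmod (f x))\<^sup>2 + 1" using sum_squares_bound[of "cmod (f x)" 1] by simp
    then show ?thesis using norm_ge_zero[of "f x"] by (simp only: real_norm_def)
  qed
  then show ?thesis
    by (intro Bochner_Integration.integrable_bound[OF int L2_measurable[OF f]] AE_I2)
qed

lemma L2_test_fun: "test_fun \<Omega> \<phi> \<Longrightarrow> L2 \<Omega> (\<lambda>x. of_real (\<phi> x))"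
  unfolding L2_def
proof
  assume \<phi>: "test_fun \<Omega> \<phi>"
  show m: "(\<lambda>x. complex_of_real (\<phi> x)) \<in> borel_measurable (lebesgue_on \<Omega>)"
    using test_fun_measurable[OF \<phi>, of \<Omega>] by measurable
  obtain B where B: "\<And>x. \<bar>\<phi> x\<bar> \<le> B"
    using \<phi> continuous_compact_support_bounded unfolding test_fun_def
    by (metis smooth_fun_continuous)
  have "norm ((cmod (complex_of_real (\<phi> x)))\<^sup>2) \<le> norm (B\<^sup>2)" for x
    using power_mono[OF B[of x] abs_ge_zero, of 2] by simp
  moreover have "(\<lambda>x. (cmod (complex_of_real (\<phi> x)))\<^sup>2) \<in> borel_measurable (lebesgue_on \<Omega>)"
    using m by measurable
  ultimately show "integrable (lebesgue_on \<Omega>) (\<lambda>x. (cmod (complex_of_real (\<phi> x)))\<^sup>2)"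
    by (intro Bochner_Integration.integrable_bound[OF
          finite_measure.integrable_const[OF finite_measure_domain, of "B\<^sup>2"]] AE_I2)
qed

lemma L2_integrable_mult_test_fun:
  "L2 \<Omega> f \<Longrightarrow> test_fun \<Omega> \<phi> \<Longrightarrow> integrable (lebesgue_on \<Omega>) (\<lambda>x. f x * of_real (\<phi> x))"
  using L2_integrable_mult_cnj[OF _ L2_test_fun, of f \<phi>] by simp

lemma is_weak_partial_lincomb:
  assumes f: "L2 \<Omega> f1" "L2 \<Omega> f2" and g: "L2 \<Omega> g1" "L2 \<Omega> g2"
    and "is_weak_partial \<Omega> j f1 g1" "is_weak_partial \<Omega> j f2 g2"
  shows "is_weak_partial \<Omega> j (\<lambda>x. a * f1 x + b * f2 x) (\<lambda>x. a * g1 x + b * g2 x)"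
  unfolding is_weak_partial_def
proof (intro allI impI)
  fix \<phi> assume \<phi>: "test_fun \<Omega> \<phi>"
  have "(LINT x|lebesgue_on \<Omega>. (a * f1 x + b * f2 x) * of_real (cpartial j \<phi> x)) =
      a * (LINT x|lebesgue_on \<Omega>. f1 x * of_real (cpartial j \<phi> x)) +
      b * (LINT x|lebesgue_on \<Omega>. f2 x * of_real (cpartial j \<phi> x))"
    using f[THEN L2_integrable_mult_test_fun, OF test_fun_cpartial[OF \<phi>]]
    by (simp add: algebra_simps)
  also have "\<dots> = - (a * (LINT x|lebesgue_on \<Omega>. g1 x * of_real (\<phi> x)) +
      b * (LINT x|lebesgue_on \<Omega>. g2 x * of_real (\<phi> x)))"
    using assms(5,6) \<phi> unfolding is_weak_partial_def by simp
  also have "\<dots> = - (LINT x|lebesgue_on \<Omega>. (a * g1 x + b * g2 x) * of_real (\<phi> x))"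
    using g[THEN L2_integrable_mult_test_fun, OF \<phi>] by (simp add: algebra_simps)
  finally show "(LINT x|lebesgue_on \<Omega>. (a * f1 x + b * f2 x) * of_real (cpartial j \<phi> x)) =
      - (LINT x|lebesgue_on \<Omega>. (a * g1 x + b * g2 x) * of_real (\<phi> x))" .
qed

lemma is_weak_partial_AE_unique:
  assumes g: "L2 \<Omega> g1" "L2 \<Omega> g2"
    and "is_weak_partial \<Omega> j f g1" "is_weak_partial \<Omega> j f g2"
  shows "AE x in lebesgue_on \<Omega>. g1 x = g2 x"
proof -
  have "AE x in lebesgue_on \<Omega>. g1 x - g2 x = 0"
  proof (rule AE_eq_0_if_orthogonal_to_test_funs[OF domain_open])
    show "integrable (lebesgue_on \<Omega>) (\<lambda>x. g1 x - g2 x)"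
      using g by (intro Bochner_Integration.integrable_diff L2_integrable)
    fix \<phi> assume \<phi>: "test_fun \<Omega> \<phi>"
    have "(LINT x|lebesgue_on \<Omega>. \<phi> x *\<^sub>R (g1 x - g2 x)) =
        (LINT x|lebesgue_on \<Omega>. g1 x * of_real (\<phi> x)) - (LINT x|lebesgue_on \<Omega>. g2 x * of_real (\<phi> x))"
      using g[THEN L2_integrable_mult_test_fun, OF \<phi>]
      by (simp add: scaleR_conv_of_real algebra_simps)
    also have "\<dots> = 0"
      using assms(3,4)[unfolded is_weak_partial_def, rule_format, OF \<phi>] by simp
    finally show "(LINT x|lebesgue_on \<Omega>. \<phi> x *\<^sub>R (g1 x - g2 x)) = 0" .
  qed
  then show ?thesis by simp
qed

lemma H1_L2: "H1 \<Omega> f \<Longrightarrow> L2 \<Omega> f"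
  unfolding H1_def by blast

lemma H1_wpartial:
  assumes "H1 \<Omega> f"
  shows "L2 \<Omega> (wpartial \<Omega> j f)" "is_weak_partial \<Omega> j f (wpartial \<Omega> j f)"
proof -
  from assms have "\<exists>g. L2 \<Omega> g \<and> is_weak_partial \<Omega> j f g" unfolding H1_def by blast
  then show "L2 \<Omega> (wpartial \<Omega> j f)" "is_weak_partial \<Omega> j f (wpartial \<Omega> j f)"
    unfolding wpartial_def by (metis (mono_tags, lifting) someI_ex)+
qed

lemma H1_lincomb:
  assumes "H1 \<Omega> f1" "H1 \<Omega> f2"
  shows "H1 \<Omega> (\<lambda>x. a * f1 x + b * f2 x)"
  unfolding H1_def
proof (intro conjI allI)
  show "L2 \<Omega> (\<lambda>x. a * f1 x + b * f2 x)" by (intro L2_lincomb H1_L2 assms)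
  fix j
  show "\<exists>g. L2 \<Omega> g \<and> is_weak_partial \<Omega> j (\<lambda>x. a * f1 x + b * f2 x) g"
    using L2_lincomb[OF assms[THEN H1_wpartial(1)]] is_weak_partial_lincomb[OF assms[THEN H1_L2]
        assms[THEN H1_wpartial(1)] assms[THEN H1_wpartial(2)]]
    by blast
qed

lemma wpartial_lincomb_AE:
  assumes "H1 \<Omega> f1" "H1 \<Omega> f2"
  shows "AE x in lebesgue_on \<Omega>. wpartial \<Omega> j (\<lambda>x. a * f1 x + b * f2 x) x =
    a * wpartial \<Omega> j f1 x + b * wpartial \<Omega> j f2 x"
  by (rule is_weak_partial_AE_unique[OF H1_wpartial(1)[OF H1_lincomb[OF assms]]
      L2_lincomb[OF assms[THEN H1_wpartial(1)]] H1_wpartial(2)[OF H1_lincomb[OF assms]]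
      is_weak_partial_lincomb[OF assms[THEN H1_L2] assms[THEN H1_wpartial(1)]
        assms[THEN H1_wpartial(2)]]])

lemma test_fun_is_weak_partial:
  assumes p: "test_fun \<Omega> p"
  shows "is_weak_partial \<Omega> j (\<lambda>x. of_real (p x)) (\<lambda>x. of_real (cpartial j p x))"
  unfolding is_weak_partial_def
proof (intro allI impI)
  fix \<phi> assume \<phi>: "test_fun \<Omega> \<phi>"
  have "(LINT x|lebesgue_on \<Omega>. complex_of_real (p x) * of_real (cpartial j \<phi> x))
      = of_real (LINT x|lebesgue_on \<Omega>. p x * cpartial j \<phi> x)"
    by (simp flip: of_real_mult)
  also have "\<dots> = - of_real (LINT x|lebesgue_on \<Omega>. cpartial j p x * \<phi> x)"
    by (simp add: test_fun_integration_by_parts[OF domain_sets p \<phi>])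
  also have "\<dots> = - (LINT x|lebesgue_on \<Omega>. complex_of_real (cpartial j p x) * of_real (\<phi> x))"
    by (simp flip: of_real_mult)
  finally show "(LINT x|lebesgue_on \<Omega>. complex_of_real (p x) * of_real (cpartial j \<phi> x)) =
      - (LINT x|lebesgue_on \<Omega>. complex_of_real (cpartial j p x) * of_real (\<phi> x))" .
qed

lemma H1_test_fun_components:
  assumes re: "test_fun \<Omega> (\<lambda>x. Re (f x))" and im: "test_fun \<Omega> (\<lambda>x. Im (f x))"
  shows "H1 \<Omega> f"
proof -
  have "f = (\<lambda>x. 1 * complex_of_real (Re (f x)) + \<i> * complex_of_real (Im (f x)))"
    by (simp add: complex_eq[symmetric])
  moreover have "H1 \<Omega> (\<lambda>x. 1 * complex_of_real (Re (f x)) + \<i> * complex_of_real (Im (f x)))"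
    unfolding H1_def
  proof (intro conjI allI)
    show "L2 \<Omega> (\<lambda>x. 1 * complex_of_real (Re (f x)) + \<i> * complex_of_real (Im (f x)))"
      by (intro L2_lincomb L2_test_fun re im)
    fix j
    show "\<exists>g. L2 \<Omega> g \<and>
        is_weak_partial \<Omega> j (\<lambda>x. 1 * complex_of_real (Re (f x)) + \<i> * complex_of_real (Im (f x))) g"
      using L2_lincomb[OF L2_test_fun[OF test_fun_cpartial[OF re]] L2_test_fun[OF test_fun_cpartial[OF im]]]
        is_weak_partial_lincomb[OF L2_test_fun[OF re] L2_test_fun[OF im]
          L2_test_fun[OF test_fun_cpartial[OF re]] L2_test_fun[OF test_fun_cpartial[OF im]]
          test_fun_is_weak_partial[OF re] test_fun_is_weak_partial[OF im]]
      by blast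
  qed
  ultimately show ?thesis by simp
qed

section \<open>The elasticity forms on \<open>H\<^sup>1\<^sub>0\<close>\<close>

definition H1_field :: "(real^'d \<Rightarrow> complex^'d) \<Rightarrow> bool" where
  "H1_field u \<longleftrightarrow> (\<forall>i. H1 \<Omega> (\<lambda>x. u x $ i))"

lemma H1_field_lincomb: "H1_field u \<Longrightarrow> H1_field v \<Longrightarrow> H1_field (\<lambda>x. a *s u x + b *s v x)"
  unfolding H1_field_def by (auto intro: H1_lincomb)

lemma L2_strain: "H1_field u \<Longrightarrow> L2 \<Omega> (strain \<Omega> u i j)"
proof -
  assume u: "H1_field u"
  have "strain \<Omega> u i j =
      (\<lambda>x. (1/2) * wpartial \<Omega> j (\<lambda>y. u y $ i) x + (1/2) * wpartial \<Omega> i (\<lambda>y. u y $ j) x)"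
    unfolding strain_def by (auto simp: field_simps)
  then show ?thesis using u unfolding H1_field_def by (simp only:) (intro L2_lincomb H1_wpartial; blast)
qed

lemma L2_wdiv: "H1_field u \<Longrightarrow> L2 \<Omega> (wdiv \<Omega> u)"
  unfolding wdiv_def[abs_def] H1_field_def by (intro L2_sum) (auto intro: H1_wpartial)

lemma strain_lincomb_AE:
  assumes "H1_field u" "H1_field v"
  shows "AE x in lebesgue_on \<Omega>. strain \<Omega> (\<lambda>x. a *s u x + b *s v x) i j x =
    a * strain \<Omega> u i j x + b * strain \<Omega> v i j x"
proof -
  have "AE x in lebesgue_on \<Omega>. wpartial \<Omega> k (\<lambda>x. a * u x $ l + b * v x $ l) x =
      a * wpartial \<Omega> k (\<lambda>x. u x $ l) x + b * wpartial \<Omega> k (\<lambda>x. v x $ l) x" for k l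
    using assms unfolding H1_field_def by (intro wpartial_lincomb_AE) auto
  from this[of j i] this[of i j] show ?thesis
    by eventually_elim (simp add: strain_def field_simps)
qed

lemma wdiv_lincomb_AE:
  assumes "H1_field u" "H1_field v"
  shows "AE x in lebesgue_on \<Omega>. wdiv \<Omega> (\<lambda>x. a *s u x + b *s v x) x =
    a * wdiv \<Omega> u x + b * wdiv \<Omega> v x"
proof -
  have "AE x in lebesgue_on \<Omega>. \<forall>i\<in>UNIV. wpartial \<Omega> i (\<lambda>x. a * u x $ i + b * v x $ i) x =
      a * wpartial \<Omega> i (\<lambda>x. u x $ i) x + b * wpartial \<Omega> i (\<lambda>x. v x $ i) x"
    using assms unfolding H1_field_def
    by (subst eventually_ball_finite_distrib) (auto intro: wpartial_lincomb_AE)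
  then show ?thesis
    by eventually_elim (simp add: wdiv_def sum.distrib sum_distrib_left)
qed

lemma sL2ip_lincomb_left_AE:
  assumes "L2 \<Omega> f" "L2 \<Omega> g" "L2 \<Omega> k" "L2 \<Omega> h"
    and "AE x in lebesgue_on \<Omega>. k x = a * f x + b * g x"
  shows "sL2ip \<Omega> k h = a * sL2ip \<Omega> f h + b * sL2ip \<Omega> g h"
proof -
  have "sL2ip \<Omega> k h = sL2ip \<Omega> (\<lambda>x. a * f x + b * g x) h"
    by (rule sL2ip_cong_AE) (use assms in \<open>auto intro: L2_lincomb\<close>)
  also have "\<dots> = a * sL2ip \<Omega> f h + b * sL2ip \<Omega> g h"
    by (rule sL2ip_lincomb_left) (use assms in auto)
  finally show ?thesis .
qed

lemma ip1_lincomb_left: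
  assumes u: "H1_field u" and v: "H1_field v" and w: "H1_field w"
  shows "ip1 \<mu> lam \<Omega> (\<lambda>x. a *s u x + b *s v x) w = a * ip1 \<mu> lam \<Omega> u w + b * ip1 \<mu> lam \<Omega> v w"
proof -
  have uv: "H1_field (\<lambda>x. a *s u x + b *s v x)" by (rule H1_field_lincomb[OF u v])
  have "sL2ip \<Omega> (strain \<Omega> (\<lambda>x. a *s u x + b *s v x) i j) (strain \<Omega> w i j)
      = a * sL2ip \<Omega> (strain \<Omega> u i j) (strain \<Omega> w i j) + b * sL2ip \<Omega> (strain \<Omega> v i j) (strain \<Omega> w i j)"
    for i j
    using u v uv w by (intro sL2ip_lincomb_left_AE L2_strain strain_lincomb_AE)
  moreover have "sL2ip \<Omega> (wdiv \<Omega> (\<lambda>x. a *s u x + b *s v x)) (wdiv \<Omega> w)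
      = a * sL2ip \<Omega> (wdiv \<Omega> u) (wdiv \<Omega> w) + b * sL2ip \<Omega> (wdiv \<Omega> v) (wdiv \<Omega> w)"
    using u v uv w by (intro sL2ip_lincomb_left_AE L2_wdiv wdiv_lincomb_AE)
  ultimately show ?thesis
    unfolding ip1_def by (simp add: sum.distrib sum_distrib_left algebra_simps)
qed

lemma ip0_lincomb_left:
  assumes u: "H1_field u" and v: "H1_field v" and w: "H1_field w"
  shows "ip0 \<rho> \<Omega> (\<lambda>x. a *s u x + b *s v x) w = a * ip0 \<rho> \<Omega> u w + b * ip0 \<rho> \<Omega> v w"
proof -
  have "sL2ip \<Omega> (\<lambda>x. a * u x $ i + b * v x $ i) (\<lambda>x. w x $ i) =
      a * sL2ip \<Omega> (\<lambda>x. u x $ i) (\<lambda>x. w x $ i) + b * sL2ip \<Omega> (\<lambda>x. v x $ i) (\<lambda>x. w x $ i)" for i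
    using u v w unfolding H1_field_def by (intro sL2ip_lincomb_left H1_L2) auto
  then show ?thesis
    unfolding ip0_def L2ip_def by (simp add: sum.distrib sum_distrib_left algebra_simps)
qed

end

lemma ip1_swap: "ip1 \<mu> lam \<Omega> v u = cnj (ip1 \<mu> lam \<Omega> u v)"
  unfolding ip1_def by (simp add: sL2ip_swap[of _ "strain \<Omega> u _ _"] sL2ip_swap[of _ "wdiv \<Omega> u"])

lemma ip0_swap: "ip0 \<rho> \<Omega> v u = cnj (ip0 \<rho> \<Omega> u v)"
  unfolding ip0_def L2ip_def by (simp add: sL2ip_swap[of _ "\<lambda>x. u x $ _"])

lemma ip1_nonneg: "0 \<le> \<mu> \<Longrightarrow> 0 \<le> lam \<Longrightarrow> 0 \<le> Re (ip1 \<mu> lam \<Omega> u u)"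
  unfolding ip1_def
  by (auto simp: Re_sum intro!: sum_nonneg add_nonneg_nonneg mult_nonneg_nonneg sL2ip_self_nonneg)

lemma ip0_nonneg: "0 \<le> \<rho> \<Longrightarrow> 0 \<le> Re (ip0 \<rho> \<Omega> u u)"
  unfolding ip0_def L2ip_def by (auto simp: Re_sum intro!: sum_nonneg mult_nonneg_nonneg sL2ip_self_nonneg)

lemma H1_normsq_nonneg: "0 \<le> H1_normsq \<Omega> u"
  unfolding H1_normsq_def by (auto intro!: sum_nonneg add_nonneg_nonneg sL2ip_self_nonneg)

lemma test_field_lincomb:
  assumes "test_field \<Omega> \<phi>" "test_field \<Omega> \<psi>"
  shows "test_field \<Omega> (\<lambda>x. a *s \<phi> x + b *s \<psi> x)"
  unfolding test_field_def
proof
  fix i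
  have components: "(\<lambda>x. Re ((a *s \<phi> x + b *s \<psi> x) $ i)) =
      (\<lambda>x. (Re a * Re (\<phi> x $ i) + (- Im a) * Im (\<phi> x $ i)) + (Re b * Re (\<psi> x $ i) + (- Im b) * Im (\<psi> x $ i)))"
    "(\<lambda>x. Im ((a *s \<phi> x + b *s \<psi> x) $ i)) =
      (\<lambda>x. (Im a * Re (\<phi> x $ i) + Re a * Im (\<phi> x $ i)) + (Im b * Re (\<psi> x $ i) + Re b * Im (\<psi> x $ i)))"
    by (auto simp: algebra_simps)
  show "test_fun \<Omega> (\<lambda>x. Re ((a *s \<phi> x + b *s \<psi> x) $ i)) \<and>
      test_fun \<Omega> (\<lambda>x. Im ((a *s \<phi> x + b *s \<psi> x) $ i))"
    unfolding components using assms unfolding test_field_def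
    by (intro conjI test_fun_add test_fun_cmult) blast+
qed

context bounded_domain
begin

lemma H1_normsq_lincomb_le:
  assumes p: "H1_field p" and q: "H1_field q"
  shows "H1_normsq \<Omega> (\<lambda>x. a *s p x + b *s q x)
    \<le> 2 * (cmod a)\<^sup>2 * H1_normsq \<Omega> p + 2 * (cmod b)\<^sup>2 * H1_normsq \<Omega> q"
proof -
  have pq: "H1 \<Omega> (\<lambda>x. p x $ i)" "H1 \<Omega> (\<lambda>x. q x $ i)" for i
    using p q unfolding H1_field_def by auto
  have values_le: "Re (sL2ip \<Omega> (\<lambda>x. a * p x $ i + b * q x $ i) (\<lambda>x. a * p x $ i + b * q x $ i))
      \<le> 2 * (cmod a)\<^sup>2 * Re (sL2ip \<Omega> (\<lambda>x. p x $ i) (\<lambda>x. p x $ i)) +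
        2 * (cmod b)\<^sup>2 * Re (sL2ip \<Omega> (\<lambda>x. q x $ i) (\<lambda>x. q x $ i))" for i
    by (rule sL2ip_self_lincomb_le[OF H1_L2[OF pq(1)] H1_L2[OF pq(2)]])
  have partials: "Re (sL2ip \<Omega> (wpartial \<Omega> j (\<lambda>x. a * p x $ i + b * q x $ i))
        (wpartial \<Omega> j (\<lambda>x. a * p x $ i + b * q x $ i)))
      \<le> 2 * (cmod a)\<^sup>2 * Re (sL2ip \<Omega> (wpartial \<Omega> j (\<lambda>x. p x $ i)) (wpartial \<Omega> j (\<lambda>x. p x $ i)))
        + 2 * (cmod b)\<^sup>2 * Re (sL2ip \<Omega> (wpartial \<Omega> j (\<lambda>x. q x $ i)) (wpartial \<Omega> j (\<lambda>x. q x $ i)))"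
    for i j
    using sL2ip_self_cong_AE[OF wpartial_lincomb_AE[OF pq]]
      sL2ip_self_lincomb_le[OF H1_wpartial(1)[OF pq(1)] H1_wpartial(1)[OF pq(2)], where a=a and b=b]
    by (simp add: H1_wpartial(1) H1_lincomb pq L2_lincomb)
  have "H1_normsq \<Omega> (\<lambda>x. a *s p x + b *s q x) \<le>
      (\<Sum>i\<in>UNIV. (2 * (cmod a)\<^sup>2 * Re (sL2ip \<Omega> (\<lambda>x. p x $ i) (\<lambda>x. p x $ i)) +
          2 * (cmod b)\<^sup>2 * Re (sL2ip \<Omega> (\<lambda>x. q x $ i) (\<lambda>x. q x $ i))) +
        (\<Sum>j\<in>UNIV. 2 * (cmod a)\<^sup>2 * Re (sL2ip \<Omega> (wpartial \<Omega> j (\<lambda>x. p x $ i)) (wpartial \<Omega> j (\<lambda>x. p x $ i)))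
          + 2 * (cmod b)\<^sup>2 * Re (sL2ip \<Omega> (wpartial \<Omega> j (\<lambda>x. q x $ i)) (wpartial \<Omega> j (\<lambda>x. q x $ i)))))"
    unfolding H1_normsq_def by (simp only: vector_add_component vector_smult_component)
      (intro sum_mono add_mono values_le partials)
  also have "\<dots> = 2 * (cmod a)\<^sup>2 * H1_normsq \<Omega> p + 2 * (cmod b)\<^sup>2 * H1_normsq \<Omega> q"
    unfolding H1_normsq_def by (simp add: sum.distrib sum_distrib_left algebra_simps)
  finally show ?thesis .
qed

lemma test_field_H1_field: "test_field \<Omega> \<phi> \<Longrightarrow> H1_field \<phi>"
  unfolding test_field_def H1_field_def by (auto intro: H1_test_fun_components)

lemma H10_H1_field: "u \<in> H10 \<Omega> \<Longrightarrow> H1_field u"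
  unfolding H10_def H1_field_def by blast

lemma H10_lincomb:
  assumes u: "u \<in> H10 \<Omega>" and v: "v \<in> H10 \<Omega>"
  shows "(\<lambda>x. a *s u x + b *s v x) \<in> H10 \<Omega>"
proof -
  obtain \<phi> where \<phi>: "\<And>k. test_field \<Omega> (\<phi> k)" "(\<lambda>k. H1_normsq \<Omega> (\<lambda>x. u x - \<phi> k x)) \<longlonglongrightarrow> 0"
    using u unfolding H10_def by blast
  obtain \<psi> where \<psi>: "\<And>k. test_field \<Omega> (\<psi> k)" "(\<lambda>k. H1_normsq \<Omega> (\<lambda>x. v x - \<psi> k x)) \<longlonglongrightarrow> 0"
    using v unfolding H10_def by blast
  have uv: "H1_field u" "H1_field v" using u v by (auto intro: H10_H1_field)
  have diff: "H1_field (\<lambda>x. u x - \<phi> k x)" "H1_field (\<lambda>x. v x - \<psi> k x)" for k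
    using H1_field_lincomb[OF uv(1) test_field_H1_field[OF \<phi>(1)[of k]], where a=1 and b="-1"]
      H1_field_lincomb[OF uv(2) test_field_H1_field[OF \<psi>(1)[of k]], where a=1 and b="-1"]
    by (simp_all add: algebra_simps)
  have "(\<lambda>x. (a *s u x + b *s v x) - (a *s \<phi> k x + b *s \<psi> k x)) =
      (\<lambda>x. a *s (u x - \<phi> k x) + b *s (v x - \<psi> k x))" for k
    by (auto simp: vec_eq_iff algebra_simps)
  then have bound: "H1_normsq \<Omega> (\<lambda>x. (a *s u x + b *s v x) - (a *s \<phi> k x + b *s \<psi> k x))
      \<le> 2 * (cmod a)\<^sup>2 * H1_normsq \<Omega> (\<lambda>x. u x - \<phi> k x) + 2 * (cmod b)\<^sup>2 * H1_normsq \<Omega> (\<lambda>x. v x - \<psi> k x)"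
    for k
    using H1_normsq_lincomb_le[OF diff] by simp
  have lim: "(\<lambda>k. 2 * (cmod a)\<^sup>2 * H1_normsq \<Omega> (\<lambda>x. u x - \<phi> k x) +
      2 * (cmod b)\<^sup>2 * H1_normsq \<Omega> (\<lambda>x. v x - \<psi> k x)) \<longlonglongrightarrow> 0"
    using tendsto_add[OF tendsto_mult_right_zero[OF \<phi>(2)] tendsto_mult_right_zero[OF \<psi>(2)]] by simp
  have "(\<lambda>k. H1_normsq \<Omega> (\<lambda>x. (a *s u x + b *s v x) - (a *s \<phi> k x + b *s \<psi> k x))) \<longlonglongrightarrow> 0"
    by (rule tendsto_sandwich[OF _ _ tendsto_const lim])
       (auto intro!: always_eventually H1_normsq_nonneg bound)
  moreover have "\<forall>k. test_field \<Omega> (\<lambda>x. a *s \<phi> k x + b *s \<psi> k x)"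
    using \<phi>(1) \<psi>(1) by (auto intro: test_field_lincomb)
  moreover have "\<forall>i. H1 \<Omega> (\<lambda>x. (a *s u x + b *s v x) $ i)"
    using H1_field_lincomb[OF uv] unfolding H1_field_def by blast
  ultimately show ?thesis unfolding H10_def mem_Collect_eq
    by (intro conjI exI[of _ "\<lambda>k x. a *s \<phi> k x + b *s \<psi> k x"]) auto
qed

end

section \<open>Hermitian forms on spaces of vector fields\<close>

locale hermitian_form =
  fixes V :: "('x \<Rightarrow> complex^'n) set"
    and B :: "('x \<Rightarrow> complex^'n) \<Rightarrow> ('x \<Rightarrow> complex^'n) \<Rightarrow> complex"
  assumes lincomb_closed: "u \<in> V \<Longrightarrow> v \<in> V \<Longrightarrow> (\<lambda>x. a *s u x + b *s v x) \<in> V"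
    and linear_left:
      "u \<in> V \<Longrightarrow> v \<in> V \<Longrightarrow> w \<in> V \<Longrightarrow> B (\<lambda>x. a *s u x + b *s v x) w = a * B u w + b * B v w"
    and hermitian: "u \<in> V \<Longrightarrow> v \<in> V \<Longrightarrow> B v u = cnj (B u v)"
begin

lemma self_real: "u \<in> V \<Longrightarrow> B u u = of_real (Re (B u u))"
  using hermitian[of u u] by (simp add: complex_eq_iff)

lemma diff_closed: "u \<in> V \<Longrightarrow> v \<in> V \<Longrightarrow> (\<lambda>x. u x - v x) \<in> V"
  using lincomb_closed[of u v 1 "-1"] by simp

lemma add_closed: "u \<in> V \<Longrightarrow> v \<in> V \<Longrightarrow> (\<lambda>x. u x + v x) \<in> V"
  using lincomb_closed[of u v 1 1] by simp

lemma scale_closed: "u \<in> V \<Longrightarrow> (\<lambda>x. a *s u x) \<in> V"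
  using lincomb_closed[of u u a 0] by simp

lemma diff_left: "u \<in> V \<Longrightarrow> v \<in> V \<Longrightarrow> w \<in> V \<Longrightarrow> B (\<lambda>x. u x - v x) w = B u w - B v w"
  using linear_left[of u v w 1 "-1"] by simp

lemma add_left: "u \<in> V \<Longrightarrow> v \<in> V \<Longrightarrow> w \<in> V \<Longrightarrow> B (\<lambda>x. u x + v x) w = B u w + B v w"
  using linear_left[of u v w 1 1] by simp

lemma scale_left: "u \<in> V \<Longrightarrow> w \<in> V \<Longrightarrow> B (\<lambda>x. a *s u x) w = a * B u w"
  using linear_left[of u u w a 0] by simp

lemma diff_right: "u \<in> V \<Longrightarrow> v \<in> V \<Longrightarrow> w \<in> V \<Longrightarrow> B w (\<lambda>x. u x - v x) = B w u - B w v"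
  by (simp add: hermitian[of _ w] diff_closed diff_left)

lemma add_right: "u \<in> V \<Longrightarrow> v \<in> V \<Longrightarrow> w \<in> V \<Longrightarrow> B w (\<lambda>x. u x + v x) = B w u + B w v"
  by (simp add: hermitian[of _ w] add_closed add_left)

lemma sum_closed_left:
  assumes "finite S" "\<And>n. n \<in> S \<Longrightarrow> \<psi> n \<in> V" "w \<in> V"
  shows "(\<lambda>x. \<Sum>n\<in>S. c n *s \<psi> n x) \<in> V \<and>
    B (\<lambda>x. \<Sum>n\<in>S. c n *s \<psi> n x) w = (\<Sum>n\<in>S. c n * B (\<psi> n) w)"
  using assms
proof (induction S rule: finite_induct)
  case empty
  then show ?case using lincomb_closed[of w w 0 0] linear_left[of w w w 0 0] by simp
next
  case (insert m S)
  then have IH: "(\<lambda>x. \<Sum>n\<in>S. c n *s \<psi> n x) \<in> V"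
      "B (\<lambda>x. \<Sum>n\<in>S. c n *s \<psi> n x) w = (\<Sum>n\<in>S. c n * B (\<psi> n) w)"
    by auto
  have m: "\<psi> m \<in> V" using insert by auto
  have "(\<lambda>x. \<Sum>n\<in>insert m S. c n *s \<psi> n x) = (\<lambda>x. c m *s \<psi> m x + 1 *s (\<Sum>n\<in>S. c n *s \<psi> n x))"
    using insert by auto
  moreover have "(\<lambda>x. c m *s \<psi> m x + 1 *s (\<Sum>n\<in>S. c n *s \<psi> n x)) \<in> V"
    by (rule lincomb_closed[OF m IH(1)])
  moreover have "B (\<lambda>x. c m *s \<psi> m x + 1 *s (\<Sum>n\<in>S. c n *s \<psi> n x)) w =
      c m * B (\<psi> m) w + 1 * B (\<lambda>x. \<Sum>n\<in>S. c n *s \<psi> n x) w"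
    using insert.prems by (intro linear_left[OF m IH(1)]) auto
  ultimately show ?case using IH(2) insert(1,2) by simp
qed

lemma sum_closed:
  "finite S \<Longrightarrow> (\<And>n. n \<in> S \<Longrightarrow> \<psi> n \<in> V) \<Longrightarrow> w \<in> V \<Longrightarrow> (\<lambda>x. \<Sum>n\<in>S. c n *s \<psi> n x) \<in> V"
  using sum_closed_left by blast

lemma sum_left:
  "finite S \<Longrightarrow> (\<And>n. n \<in> S \<Longrightarrow> \<psi> n \<in> V) \<Longrightarrow> w \<in> V \<Longrightarrow>
    B (\<lambda>x. \<Sum>n\<in>S. c n *s \<psi> n x) w = (\<Sum>n\<in>S. c n * B (\<psi> n) w)"
  using sum_closed_left by blast

lemma sum_right:
  assumes "finite S" "\<And>n. n \<in> S \<Longrightarrow> \<psi> n \<in> V" "w \<in> V"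
  shows "B w (\<lambda>x. \<Sum>n\<in>S. c n *s \<psi> n x) = (\<Sum>n\<in>S. cnj (c n) * B w (\<psi> n))"
  using assms by (simp add: hermitian[OF _ assms(3)] sum_closed sum_left)

lemma pythagoras:
  assumes "u \<in> V" "v \<in> V" "B u v = 0"
  shows "B (\<lambda>x. u x + v x) (\<lambda>x. u x + v x) = B u u + B v v"
  using assms hermitian[of u v] by (simp add: add_left add_right add_closed)

end

lemma hermitian_form_combination:
  assumes B1: "hermitian_form V B1" and B0: "hermitian_form V B0"
  shows "hermitian_form V (\<lambda>u v. B1 u v - of_real r * B0 u v)"
proof
  show "\<And>u v a b. u \<in> V \<Longrightarrow> v \<in> V \<Longrightarrow> (\<lambda>x. a *s u x + b *s v x) \<in> V"
    by (rule hermitian_form.lincomb_closed[OF B1])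
  show "\<And>u v w a b. u \<in> V \<Longrightarrow> v \<in> V \<Longrightarrow> w \<in> V \<Longrightarrow>
      B1 (\<lambda>x. a *s u x + b *s v x) w - of_real r * B0 (\<lambda>x. a *s u x + b *s v x) w =
      a * (B1 u w - of_real r * B0 u w) + b * (B1 v w - of_real r * B0 v w)"
    by (simp add: hermitian_form.linear_left[OF B1] hermitian_form.linear_left[OF B0] algebra_simps)
  fix u v assume "u \<in> V" "v \<in> V"
  then show "B1 v u - of_real r * B0 v u = cnj (B1 u v - of_real r * B0 u v)"
    by (simp add: hermitian_form.hermitian[OF B1, of u v] hermitian_form.hermitian[OF B0, of u v])
qed

section \<open>\<open>T\<close>-coercivity from an eigenbasis\<close>

locale eigenbasis =
  fixes V :: "('x \<Rightarrow> complex^'n) set"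
    and B1 B0 :: "('x \<Rightarrow> complex^'n) \<Rightarrow> ('x \<Rightarrow> complex^'n) \<Rightarrow> complex"
    and \<psi> :: "nat \<Rightarrow> 'x \<Rightarrow> complex^'n" and \<kappa> :: "nat \<Rightarrow> real" and \<omega> :: real
  assumes B1: "hermitian_form V B1" and B0: "hermitian_form V B0"
    and B1_nonneg: "u \<in> V \<Longrightarrow> 0 \<le> Re (B1 u u)" and B0_nonneg: "u \<in> V \<Longrightarrow> 0 \<le> Re (B0 u u)"
    and eigvec_in: "\<psi> n \<in> V" and eigval_pos: "0 < \<kappa> n" and eigval_mono: "mono \<kappa>"
    and eigval_tendsto: "filterlim \<kappa> at_top sequentially"
    and eigen: "v \<in> V \<Longrightarrow> B1 (\<psi> n) v = of_real (\<kappa> n) * B0 (\<psi> n) v"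
    and orthogonal: "n \<noteq> m \<Longrightarrow> B0 (\<psi> n) (\<psi> m) = 0"
    and normalized: "Re (B1 (\<psi> n) (\<psi> n) + B0 (\<psi> n) (\<psi> n)) = 1"
    and complete: "v \<in> V \<Longrightarrow> 0 < e \<Longrightarrow>
      \<exists>N c. let d = (\<lambda>x. v x - (\<Sum>n<N. c n *s \<psi> n x)) in Re (B1 d d + B0 d d) < e"
    and non_resonant: "\<omega>\<^sup>2 \<notin> range \<kappa>"
begin

text \<open>The pencil \<open>B\<^sub>1 - r B\<^sub>0\<close> contains both the inner product of \<open>V\<close> (\<open>r = -1\<close>)
  and the form \<open>a\<^sub>1\<close> (\<open>r = \<omega>\<^sup>2\<close>); all its members are diagonalised by the eigenbasis.\<close>

definition pencil :: "real \<Rightarrow> ('x \<Rightarrow> complex^'n) \<Rightarrow> ('x \<Rightarrow> complex^'n) \<Rightarrow> complex" where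
  "pencil r u v = B1 u v - of_real r * B0 u v"

abbreviation inner_V where "inner_V \<equiv> pencil (-1)"

definition mode_sum :: "nat set \<Rightarrow> (nat \<Rightarrow> complex) \<Rightarrow> 'x \<Rightarrow> complex^'n" where
  "mode_sum S c = (\<lambda>x. \<Sum>n\<in>S. c n *s \<psi> n x)"

definition proj :: "nat set \<Rightarrow> ('x \<Rightarrow> complex^'n) \<Rightarrow> 'x \<Rightarrow> complex^'n" where
  "proj S v = mode_sum S (\<lambda>n. inner_V v (\<psi> n))"

lemma hermitian_form_pencil: "hermitian_form V (pencil r)"
proof -
  have "pencil r = (\<lambda>u v. B1 u v - of_real r * B0 u v)" by (simp add: fun_eq_iff pencil_def)
  then show ?thesis using hermitian_form_combination[OF B1 B0, of r] by simp
qed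

interpretation pencil: hermitian_form V "pencil r" for r
  by (rule hermitian_form_pencil)

lemma inner_V_eq: "inner_V u v = B1 u v + B0 u v"
  by (simp add: pencil_def)

lemma inner_V_nonneg: "u \<in> V \<Longrightarrow> 0 \<le> Re (inner_V u u)"
  using B1_nonneg B0_nonneg by (simp add: inner_V_eq)

lemma pencil_eigvec:
  assumes v: "v \<in> V"
  shows "pencil r (\<psi> n) v = of_real ((\<kappa> n - r) / (\<kappa> n + 1)) * inner_V (\<psi> n) v"
proof -
  have pencil: "pencil r (\<psi> n) v = of_real (\<kappa> n - r) * B0 (\<psi> n) v"
    and inner: "inner_V (\<psi> n) v = of_real (\<kappa> n + 1) * B0 (\<psi> n) v"
    by (simp_all add: pencil_def eigen[OF v] algebra_simps)
  have "\<kappa> n + 1 \<noteq> 0" using eigval_pos[of n] by linarith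
  then have cancel: "(\<kappa> n - r) / (\<kappa> n + 1) * (\<kappa> n + 1) = \<kappa> n - r" by simp
  show ?thesis
    unfolding pencil inner by (simp only: mult.assoc[symmetric] of_real_mult[symmetric] cancel)
qed

lemma inner_V_eigvec: "inner_V (\<psi> m) (\<psi> n) = (if m = n then 1 else 0)"
proof -
  have "Re (inner_V (\<psi> n) (\<psi> n)) = 1"
    using normalized[of n] by (simp only: inner_V_eq)
  then have "inner_V (\<psi> n) (\<psi> n) = 1"
    using pencil.self_real[OF eigvec_in, of "-1" n] by simp
  moreover have "m \<noteq> n \<Longrightarrow> inner_V (\<psi> m) (\<psi> n) = 0"
    by (simp add: inner_V_eq eigen eigvec_in orthogonal)
  ultimately show ?thesis by simp
qed

lemma mode_sum_in: "finite S \<Longrightarrow> mode_sum S c \<in> V"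
  unfolding mode_sum_def by (rule pencil.sum_closed[OF _ eigvec_in eigvec_in])

lemma pencil_mode_sum_left:
  "finite S \<Longrightarrow> w \<in> V \<Longrightarrow> pencil r (mode_sum S c) w = (\<Sum>n\<in>S. c n * pencil r (\<psi> n) w)"
  unfolding mode_sum_def by (rule pencil.sum_left[OF _ eigvec_in])

lemma pencil_mode_sum_right:
  "finite S \<Longrightarrow> w \<in> V \<Longrightarrow> pencil r w (mode_sum S c) = (\<Sum>n\<in>S. cnj (c n) * pencil r w (\<psi> n))"
  unfolding mode_sum_def by (rule pencil.sum_right[OF _ eigvec_in])

lemma pencil_mode_sum_eigvec:
  assumes "finite S"
  shows "pencil r (mode_sum S c) (\<psi> m) = (if m \<in> S then c m * ((\<kappa> m - r) / (\<kappa> m + 1)) else 0)"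
proof -
  have "pencil r (mode_sum S c) (\<psi> m) = (\<Sum>n\<in>S. c n * pencil r (\<psi> n) (\<psi> m))"
    by (rule pencil_mode_sum_left[OF assms eigvec_in])
  also have "\<dots> = (\<Sum>n\<in>S. if n = m then c m * ((\<kappa> m - r) / (\<kappa> m + 1)) else 0)"
    by (intro sum.cong) (auto simp: pencil_eigvec[OF eigvec_in, of r] inner_V_eigvec)
  finally show ?thesis using assms by simp
qed

lemma inner_V_mode_sum_eigvec:
  "finite S \<Longrightarrow> inner_V (mode_sum S c) (\<psi> m) = (if m \<in> S then c m else 0)"
  using pencil_mode_sum_eigvec[of S "-1" c m] eigval_pos[of m] by simp

lemma pencil_mode_sum_self:
  assumes "finite S"
  shows "pencil r (mode_sum S c) (mode_sum S c) =
    of_real (\<Sum>n\<in>S. (cmod (c n))\<^sup>2 * ((\<kappa> n - r) / (\<kappa> n + 1)))"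
proof -
  have "pencil r (mode_sum S c) (mode_sum S c) = (\<Sum>n\<in>S. cnj (c n) * pencil r (mode_sum S c) (\<psi> n))"
    by (rule pencil_mode_sum_right[OF assms mode_sum_in[OF assms]])
  also have "\<dots> = (\<Sum>n\<in>S. of_real ((cmod (c n))\<^sup>2 * ((\<kappa> n - r) / (\<kappa> n + 1))))"
  proof (intro sum.cong refl)
    fix n assume "n \<in> S"
    have "cnj (c n) * c n = of_real ((cmod (c n))\<^sup>2)" by (metis complex_norm_square mult.commute)
    then show "cnj (c n) * pencil r (mode_sum S c) (\<psi> n) =
        of_real ((cmod (c n))\<^sup>2 * ((\<kappa> n - r) / (\<kappa> n + 1)))"
      using \<open>n \<in> S\<close> by (simp add: pencil_mode_sum_eigvec[OF assms] mult.assoc[symmetric])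
  qed
  finally show ?thesis by simp
qed

lemma pencil_mode_sum_orthogonal:
  assumes "finite S" "w \<in> V" "\<And>m. m \<in> S \<Longrightarrow> inner_V w (\<psi> m) = 0"
  shows "pencil r (mode_sum S c) w = 0" "pencil r w (mode_sum S c) = 0"
proof -
  have "pencil r (\<psi> m) w = 0" if "m \<in> S" for m
  proof -
    have "inner_V (\<psi> m) w = 0"
      using assms(3)[OF that] pencil.hermitian[OF assms(2) eigvec_in, of "-1" m] by simp
    then show ?thesis by (simp add: pencil_eigvec[OF assms(2), of r m])
  qed
  then show "pencil r (mode_sum S c) w = 0"
    by (simp add: pencil_mode_sum_left[OF assms(1,2)])
  then show "pencil r w (mode_sum S c) = 0"
    using pencil.hermitian[OF mode_sum_in[OF assms(1)] assms(2)] by simp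
qed

lemma proj_in: "finite S \<Longrightarrow> proj S v \<in> V"
  unfolding proj_def by (rule mode_sum_in)

lemma proj_orthogonal:
  assumes "finite S" "v \<in> V" "m \<in> S"
  shows "inner_V (\<lambda>x. v x - proj S v x) (\<psi> m) = 0"
  using assms by (simp add: pencil.diff_left mode_sum_in eigvec_in proj_def inner_V_mode_sum_eigvec)

lemma proj_best_approximation:
  assumes S: "finite S" and v: "v \<in> V"
  shows "Re (inner_V (\<lambda>x. v x - proj S v x) (\<lambda>x. v x - proj S v x)) \<le>
    Re (inner_V (\<lambda>x. v x - mode_sum S c x) (\<lambda>x. v x - mode_sum S c x))"
proof -
  define e where "e = (\<lambda>x. v x - proj S v x)"
  define d where "d = mode_sum S (\<lambda>n. inner_V v (\<psi> n) - c n)"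
  have e: "e \<in> V" unfolding e_def by (intro pencil.diff_closed v proj_in S)
  have d: "d \<in> V" unfolding d_def by (rule mode_sum_in[OF S])
  have "(\<lambda>x. v x - mode_sum S c x) = (\<lambda>x. e x + d x)"
    by (auto simp: e_def d_def proj_def mode_sum_def vec_eq_iff algebra_simps sum_subtractf)
  moreover have "inner_V e d = 0"
    unfolding d_def using proj_orthogonal[OF S v] e
    by (intro pencil_mode_sum_orthogonal(2)[OF S]) (auto simp: e_def)
  ultimately show ?thesis
    using pencil.pythagoras[OF e d] inner_V_nonneg[OF d] by (simp add: e_def)
qed

text \<open>Beyond the low modes \<open>B\<^sub>1 \<ge> r B\<^sub>0\<close>: write \<open>w\<close> as its projection onto finitely many
  modes plus a remainder which the completeness of the eigenbasis makes arbitrarily small.\<close>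

lemma pencil_self_lower_bound:
  assumes w: "w \<in> V" and low: "\<And>m. \<kappa> m < r \<Longrightarrow> inner_V w (\<psi> m) = 0" and "0 \<le> r"
  shows "- r * Re (inner_V (\<lambda>x. w x - mode_sum {..<N} c x) (\<lambda>x. w x - mode_sum {..<N} c x))
    \<le> Re (pencil r w w)"
proof -
  define p where "p = proj {..<N} w"
  define e where "e = (\<lambda>x. w x - p x)"
  have p: "p \<in> V" unfolding p_def by (simp add: proj_in)
  have e: "e \<in> V" unfolding e_def by (intro pencil.diff_closed w p)
  have "0 \<le> Re (pencil r p p)"
  proof -
    have "0 \<le> (cmod (inner_V w (\<psi> n)))\<^sup>2 * ((\<kappa> n - r) / (\<kappa> n + 1))" for n
      using low[of n] eigval_pos[of n] by (cases "\<kappa> n < r") auto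
    then show ?thesis unfolding p_def proj_def pencil_mode_sum_self[OF finite_lessThan]
      by (simp add: sum_nonneg)
  qed
  moreover have "- r * Re (inner_V e e) \<le> Re (pencil r e e)"
  proof -
    have "0 \<le> r * Re (B1 e e)" using \<open>0 \<le> r\<close> B1_nonneg[OF e] by simp
    then show ?thesis using B1_nonneg[OF e] by (simp add: pencil_def inner_V_eq algebra_simps)
  qed
  moreover have "Re (inner_V e e) \<le>
      Re (inner_V (\<lambda>x. w x - mode_sum {..<N} c x) (\<lambda>x. w x - mode_sum {..<N} c x))"
    unfolding e_def p_def by (rule proj_best_approximation[OF finite_lessThan w])
  then have "r * Re (inner_V e e) \<le>
      r * Re (inner_V (\<lambda>x. w x - mode_sum {..<N} c x) (\<lambda>x. w x - mode_sum {..<N} c x))"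
    using \<open>0 \<le> r\<close> by (rule mult_left_mono)
  moreover have "pencil r p e = 0"
    unfolding p_def proj_def
    by (rule pencil_mode_sum_orthogonal(1)[OF finite_lessThan e])
       (use proj_orthogonal[OF finite_lessThan w] in \<open>simp add: e_def p_def\<close>)
  then have "pencil r w w = pencil r p p + pencil r e e"
    using pencil.pythagoras[OF p e] by (simp add: e_def)
  ultimately show ?thesis by simp
qed

lemma pencil_self_nonneg:
  assumes w: "w \<in> V" and low: "\<And>m. \<kappa> m < r \<Longrightarrow> inner_V w (\<psi> m) = 0" and "0 \<le> r"
  shows "0 \<le> Re (pencil r w w)"
proof (rule field_le_epsilon)
  fix \<epsilon> :: real assume "0 < \<epsilon>"
  then have "0 < \<epsilon> / (r + 1)" using \<open>0 \<le> r\<close> by simp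
  from complete[OF w this] obtain N c where
    approx: "Re (inner_V (\<lambda>x. w x - mode_sum {..<N} c x) (\<lambda>x. w x - mode_sum {..<N} c x)) < \<epsilon> / (r + 1)"
    by (auto simp: Let_def inner_V_eq mode_sum_def)
  have "r * Re (inner_V (\<lambda>x. w x - mode_sum {..<N} c x) (\<lambda>x. w x - mode_sum {..<N} c x))
      \<le> r * (\<epsilon> / (r + 1))"
    using less_imp_le[OF approx] \<open>0 \<le> r\<close> by (rule mult_left_mono)
  moreover have "r * (\<epsilon> / (r + 1)) \<le> \<epsilon>"
    using \<open>0 < \<epsilon>\<close> \<open>0 \<le> r\<close> by (simp add: field_simps)
  moreover have "- r * Re (inner_V (\<lambda>x. w x - mode_sum {..<N} c x) (\<lambda>x. w x - mode_sum {..<N} c x))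
      \<le> Re (pencil r w w)"
    by (rule pencil_self_lower_bound[OF w low \<open>0 \<le> r\<close>])
  ultimately show "0 \<le> Re (pencil r w w) + \<epsilon>" by linarith
qed

lemma pencil_coercive:
  assumes w: "w \<in> V" and "0 \<le> Re (pencil s w w)" "0 \<le> r" "0 < s"
  shows "(s - r) / (s + 1) * Re (inner_V w w) \<le> Re (pencil r w w)"
proof -
  define a where "a = Re (B1 w w)"
  define b where "b = Re (B0 w w)"
  have "0 \<le> a - s * b" using assms(2) by (simp add: a_def b_def pencil_def)
  then have "0 \<le> (1 + r) * (a - s * b)" using \<open>0 \<le> r\<close> by simp
  moreover have "(s + 1) * (a - r * b) - (s - r) * (a + b) = (1 + r) * (a - s * b)"
    by (simp add: algebra_simps)
  ultimately have "(s - r) * (a + b) / (s + 1) \<le> a - r * b"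
    using \<open>0 < s\<close> by (simp add: pos_divide_le_eq mult.commute)
  then show ?thesis by (simp add: a_def b_def pencil_def inner_V_eq)
qed

lemma finite_low_modes: "finite (low_modes \<omega> \<kappa>)"
proof -
  obtain N where "\<forall>n\<ge>N. \<omega>\<^sup>2 + 1 \<le> \<kappa> n"
    using eigval_tendsto unfolding filterlim_at_top eventually_sequentially by blast
  then have "low_modes \<omega> \<kappa> \<subseteq> {..<N}"
    unfolding low_modes_def by (force simp: not_less[symmetric])
  then show ?thesis using finite_subset by blast
qed

text \<open>The witness is the first eigenvalue outside the low modes; non-resonance makes it
  strictly larger than \<open>\<omega>\<^sup>2\<close>.\<close>

lemma spectral_gap:
  obtains k where "\<omega>\<^sup>2 < k" "\<And>n. n \<notin> low_modes \<omega> \<kappa> \<Longrightarrow> k \<le> \<kappa> n"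
proof -
  obtain N where "N \<notin> low_modes \<omega> \<kappa>" using finite_low_modes by (meson ex_new_if_finite infinite_UNIV_nat)
  define n0 where "n0 = (LEAST n. n \<notin> low_modes \<omega> \<kappa>)"
  have n0: "n0 \<notin> low_modes \<omega> \<kappa>"
    unfolding n0_def by (rule LeastI[of "\<lambda>n. n \<notin> low_modes \<omega> \<kappa>", OF \<open>N \<notin> low_modes \<omega> \<kappa>\<close>])
  have "\<kappa> n0 \<le> \<kappa> n" if "n \<notin> low_modes \<omega> \<kappa>" for n
    using Least_le[of "\<lambda>n. n \<notin> low_modes \<omega> \<kappa>", OF that] eigval_mono
    unfolding n0_def by (simp add: mono_def)
  moreover have "\<omega>\<^sup>2 < \<kappa> n0"
    using n0 non_resonant unfolding low_modes_def by (metis rangeI linorder_neqE_linordered_idom mem_Collect_eq)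
  ultimately show thesis by (rule that[rotated])
qed

lemma pencil_mode_sum_upper_bound:
  assumes "finite S" "\<And>n. n \<in> S \<Longrightarrow> \<delta> \<le> (r - \<kappa> n) / (\<kappa> n + 1)"
  shows "\<delta> * Re (inner_V (mode_sum S c) (mode_sum S c)) \<le> - Re (pencil r (mode_sum S c) (mode_sum S c))"
proof -
  have "\<delta> * (cmod (c n))\<^sup>2 \<le> - ((cmod (c n))\<^sup>2 * ((\<kappa> n - r) / (\<kappa> n + 1)))" if "n \<in> S" for n
    using mult_right_mono[OF assms(2)[OF that], of "(cmod (c n))\<^sup>2"]
    by (simp add: field_simps minus_divide_left)
  moreover have "(\<kappa> n - - 1) / (\<kappa> n + 1) = 1" for n
    using eigval_pos[of n] by simp
  ultimately show ?thesis
    using assms(1) by (simp add: pencil_mode_sum_self sum_distrib_left sum_negf[symmetric] sum_mono)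
qed

definition orth_proj :: "('x \<Rightarrow> complex^'n) \<Rightarrow> 'x \<Rightarrow> complex^'n" where
  "orth_proj v = (THE w. w \<in> range (mode_sum (low_modes \<omega> \<kappa>)) \<and>
    (\<forall>z\<in>range (mode_sum (low_modes \<omega> \<kappa>)). inner_V (\<lambda>x. v x - w x) z = 0))"

definition reflection :: "('x \<Rightarrow> complex^'n) \<Rightarrow> 'x \<Rightarrow> complex^'n" where
  "reflection v = (\<lambda>x. v x - 2 *s orth_proj v x)"

lemma eigvec_eq_mode_sum:
  assumes "finite S" "m \<in> S"
  shows "\<psi> m = mode_sum S (\<lambda>n. if n = m then 1 else 0)"
proof
  fix x
  have "(\<Sum>n\<in>S. (if n = m then 1 else 0) *s \<psi> n x) = (\<Sum>n\<in>S. if n = m then \<psi> n x else 0)"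
    by (intro sum.cong) auto
  then show "\<psi> m x = mode_sum S (\<lambda>n. if n = m then 1 else 0) x"
    using assms by (simp add: mode_sum_def)
qed

lemma orth_proj_eq_proj:
  assumes v: "v \<in> V"
  shows "orth_proj v = proj (low_modes \<omega> \<kappa>) v"
  unfolding orth_proj_def
proof (rule the_equality)
  let ?L = "low_modes \<omega> \<kappa>"
  have "(\<lambda>x. v x - proj ?L v x) \<in> V" by (intro pencil.diff_closed v proj_in finite_low_modes)
  then show "proj ?L v \<in> range (mode_sum ?L) \<and>
      (\<forall>z\<in>range (mode_sum ?L). inner_V (\<lambda>x. v x - proj ?L v x) z = 0)"
    unfolding proj_def
    using pencil_mode_sum_orthogonal(2)[OF finite_low_modes _ proj_orthogonal[OF finite_low_modes v]]
    by (auto simp: proj_def)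
  fix w assume w: "w \<in> range (mode_sum ?L) \<and> (\<forall>z\<in>range (mode_sum ?L). inner_V (\<lambda>x. v x - w x) z = 0)"
  then obtain c where c: "w = mode_sum ?L c" by auto
  have "c m = inner_V v (\<psi> m)" if m: "m \<in> ?L" for m
  proof -
    have "\<psi> m \<in> range (mode_sum (low_modes \<omega> \<kappa>))"
      using eigvec_eq_mode_sum[OF finite_low_modes m] by blast
    then have "0 = inner_V (\<lambda>x. v x - w x) (\<psi> m)" using bspec[OF conjunct2[OF w]] by simp
    also have "\<dots> = inner_V v (\<psi> m) - c m"
      using m by (simp add: c pencil.diff_left v mode_sum_in finite_low_modes eigvec_in
          inner_V_mode_sum_eigvec)
    finally show ?thesis by simp
  qed
  then show "w = proj ?L v" unfolding c proj_def mode_sum_def by (intro ext sum.cong) auto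
qed

lemma reflection_eq: "v \<in> V \<Longrightarrow> reflection v = (\<lambda>x. v x - 2 *s proj (low_modes \<omega> \<kappa>) v x)"
  by (simp add: reflection_def orth_proj_eq_proj)

lemma reflection_in: "v \<in> V \<Longrightarrow> reflection v \<in> V"
  unfolding reflection_eq by (intro pencil.diff_closed pencil.scale_closed proj_in finite_low_modes)

lemma reflection_involutive:
  assumes v: "v \<in> V"
  shows "reflection (reflection v) = v"
proof -
  let ?L = "low_modes \<omega> \<kappa>"
  have p: "proj ?L v \<in> V" by (rule proj_in[OF finite_low_modes])
  have "inner_V (reflection v) (\<psi> m) = - inner_V v (\<psi> m)" if "m \<in> ?L" for m
  proof -
    have "inner_V (reflection v) (\<psi> m) = inner_V v (\<psi> m) - 2 * inner_V (proj ?L v) (\<psi> m)"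
      unfolding reflection_eq[OF v]
      by (simp add: pencil.diff_left pencil.scale_left pencil.scale_closed v p eigvec_in)
    also have "inner_V (proj ?L v) (\<psi> m) = inner_V v (\<psi> m)"
      using that by (simp add: proj_def inner_V_mode_sum_eigvec finite_low_modes)
    finally show ?thesis by simp
  qed
  then have "proj ?L (reflection v) = (\<lambda>x. - proj ?L v x)"
    unfolding proj_def mode_sum_def by (auto simp: sum_negf intro: sum.cong)
  then show ?thesis
    by (simp add: reflection_eq[OF reflection_in[OF v]]) (simp add: reflection_eq[OF v])
qed

lemma bij_betw_reflection: "bij_betw reflection V V"
  by (rule bij_betw_byWitness[where f'=reflection]) (auto simp: reflection_involutive reflection_in)

lemma reflection_lincomb:
  assumes "u \<in> V" "v \<in> V"
  shows "reflection (\<lambda>x. a *s u x + b *s v x) = (\<lambda>x. a *s reflection u x + b *s reflection v x)"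
proof -
  let ?L = "low_modes \<omega> \<kappa>"
  have "proj ?L (\<lambda>x. a *s u x + b *s v x) = (\<lambda>x. a *s proj ?L u x + b *s proj ?L v x)"
    unfolding proj_def mode_sum_def using assms
    by (auto simp: pencil.linear_left eigvec_in vec_eq_iff sum_distrib_left sum.distrib algebra_simps)
  then show ?thesis
    using assms pencil.lincomb_closed[OF assms]
    by (simp add: reflection_eq vec_eq_iff algebra_simps)
qed

lemma low_high_decomposition:
  assumes v: "v \<in> V"
  obtains c w where "w \<in> V" "v = (\<lambda>x. mode_sum (low_modes \<omega> \<kappa>) c x + w x)"
    "reflection v = (\<lambda>x. w x - mode_sum (low_modes \<omega> \<kappa>) c x)"
    "\<And>m. m \<in> low_modes \<omega> \<kappa> \<Longrightarrow> inner_V w (\<psi> m) = 0"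
proof
  let ?L = "low_modes \<omega> \<kappa>" and ?c = "\<lambda>n. inner_V v (\<psi> n)"
  show "(\<lambda>x. v x - proj ?L v x) \<in> V" by (intro pencil.diff_closed v proj_in finite_low_modes)
  show "v = (\<lambda>x. mode_sum ?L ?c x + (v x - proj ?L v x))" by (simp add: proj_def)
  show "reflection v = (\<lambda>x. (v x - proj ?L v x) - mode_sum ?L ?c x)"
    unfolding reflection_eq[OF v] proj_def
    by (rule ext) (simp only: vec_eq_iff vector_minus_component vector_smult_component, simp)
  show "inner_V (\<lambda>x. v x - proj ?L v x) (\<psi> m) = 0" if "m \<in> ?L" for m
    by (rule proj_orthogonal[OF finite_low_modes v that])
qed

lemma inner_V_reflection: "v \<in> V \<Longrightarrow> inner_V (reflection v) (reflection v) = inner_V v v"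
proof -
  assume v: "v \<in> V"
  then obtain c w where w: "w \<in> V" and
    decomp: "v = (\<lambda>x. mode_sum (low_modes \<omega> \<kappa>) c x + w x)"
      "reflection v = (\<lambda>x. w x - mode_sum (low_modes \<omega> \<kappa>) c x)"
    and orth: "\<And>m. m \<in> low_modes \<omega> \<kappa> \<Longrightarrow> inner_V w (\<psi> m) = 0"
    using low_high_decomposition by blast
  define p where "p = mode_sum (low_modes \<omega> \<kappa>) c"
  have p: "p \<in> V" unfolding p_def by (rule mode_sum_in[OF finite_low_modes])
  have cross: "inner_V p w = 0" "inner_V w p = 0"
    unfolding p_def using pencil_mode_sum_orthogonal[OF finite_low_modes w orth] by simp_all
  have "inner_V (reflection v) (reflection v) = inner_V w w + inner_V p p"
    unfolding decomp(2) p_def[symmetric] using w p cross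
    by (simp add: pencil.diff_left pencil.diff_right pencil.diff_closed)
  moreover have "inner_V v v = inner_V w w + inner_V p p"
    unfolding decomp(1) p_def[symmetric] using w p cross
    by (simp add: pencil.add_left pencil.add_right pencil.add_closed)
  ultimately show ?thesis by simp
qed

lemma pencil_reflection_lower_bound:
  assumes v: "v \<in> V" and k: "\<omega>\<^sup>2 < k" "\<And>n. n \<notin> low_modes \<omega> \<kappa> \<Longrightarrow> k \<le> \<kappa> n"
    and \<delta>: "\<And>n. n \<in> low_modes \<omega> \<kappa> \<Longrightarrow> \<delta> \<le> (\<omega>\<^sup>2 - \<kappa> n) / (\<kappa> n + 1)"
  shows "min ((k - \<omega>\<^sup>2) / (k + 1)) \<delta> * Re (inner_V v v) \<le> Re (pencil (\<omega>\<^sup>2) v (reflection v))"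
proof -
  let ?L = "low_modes \<omega> \<kappa>" and ?\<delta>\<^sub>1 = "(k - \<omega>\<^sup>2) / (k + 1)"
  obtain c w where w: "w \<in> V" and
    decomp: "v = (\<lambda>x. mode_sum ?L c x + w x)" "reflection v = (\<lambda>x. w x - mode_sum ?L c x)"
    and orth: "\<And>m. m \<in> ?L \<Longrightarrow> inner_V w (\<psi> m) = 0"
    using low_high_decomposition[OF v] by blast
  define p where "p = mode_sum ?L c"
  have p: "p \<in> V" unfolding p_def by (rule mode_sum_in[OF finite_low_modes])
  have cross: "pencil r p w = 0" "pencil r w p = 0" for r
    unfolding p_def using pencil_mode_sum_orthogonal[OF finite_low_modes w orth] by simp_all
  have k_pos: "0 < k" using k(1) zero_le_power2[of \<omega>] by linarith
  have "0 \<le> Re (pencil k w w)"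
    by (rule pencil_self_nonneg[OF w _ less_imp_le[OF k_pos]])
       (use orth k(2) in \<open>force simp: not_le[symmetric]\<close>)
  then have "?\<delta>\<^sub>1 * Re (inner_V w w) \<le> Re (pencil (\<omega>\<^sup>2) w w)"
    by (rule pencil_coercive[OF w _ zero_le_power2 k_pos])
  moreover have "\<delta> * Re (inner_V p p) \<le> - Re (pencil (\<omega>\<^sup>2) p p)"
    unfolding p_def by (rule pencil_mode_sum_upper_bound[OF finite_low_modes \<delta>])
  moreover have "inner_V v v = inner_V w w + inner_V p p"
    unfolding decomp(1) p_def[symmetric] using p w cross
    by (simp add: pencil.add_left pencil.add_right pencil.add_closed)
  moreover have "pencil (\<omega>\<^sup>2) v (reflection v) = pencil (\<omega>\<^sup>2) w w - pencil (\<omega>\<^sup>2) p p"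
    unfolding decomp(2) unfolding decomp(1) p_def[symmetric] using p w cross
    by (simp add: pencil.add_left pencil.diff_right pencil.diff_closed)
  moreover have "min ?\<delta>\<^sub>1 \<delta> * Re (inner_V w w) \<le> ?\<delta>\<^sub>1 * Re (inner_V w w)"
    "min ?\<delta>\<^sub>1 \<delta> * Re (inner_V p p) \<le> \<delta> * Re (inner_V p p)"
    using mult_right_mono[OF min.cobounded1 inner_V_nonneg[OF w]]
      mult_right_mono[OF min.cobounded2 inner_V_nonneg[OF p]] by blast+
  ultimately show ?thesis by (simp add: distrib_left)
qed

lemma reflection_coercive:
  "\<exists>\<alpha>>0. \<forall>v\<in>V. \<alpha> * Re (inner_V v v) \<le> cmod (pencil (\<omega>\<^sup>2) v (reflection v))"
proof -
  let ?L = "low_modes \<omega> \<kappa>"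
  obtain k where k: "\<omega>\<^sup>2 < k" "\<And>n. n \<notin> ?L \<Longrightarrow> k \<le> \<kappa> n" using spectral_gap by blast
  define \<delta> where "\<delta> = Min (insert 1 ((\<lambda>n. (\<omega>\<^sup>2 - \<kappa> n) / (\<kappa> n + 1)) ` ?L))"
  have "0 < (\<omega>\<^sup>2 - \<kappa> n) / (\<kappa> n + 1)" if "n \<in> ?L" for n
    using that eigval_pos[of n] unfolding low_modes_def by simp
  then have "0 < \<delta>"
    unfolding \<delta>_def using finite_low_modes by (subst Min_gr_iff) auto
  moreover have "0 < (k - \<omega>\<^sup>2) / (k + 1)"
    using k(1) zero_le_power2[of \<omega>] by (intro divide_pos_pos) linarith+
  ultimately have pos: "0 < min ((k - \<omega>\<^sup>2) / (k + 1)) \<delta>" by simp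
  have \<delta>: "\<delta> \<le> (\<omega>\<^sup>2 - \<kappa> n) / (\<kappa> n + 1)" if "n \<in> ?L" for n
    unfolding \<delta>_def using that finite_low_modes by (intro Min_le) auto
  have "min ((k - \<omega>\<^sup>2) / (k + 1)) \<delta> * Re (inner_V v v) \<le> cmod (pencil (\<omega>\<^sup>2) v (reflection v))"
    if "v \<in> V" for v
    using pencil_reflection_lower_bound[OF that k \<delta>] complex_Re_le_cmod by (rule order_trans)
  with pos show ?thesis by blast
qed

end

lemma (in bounded_domain) hermitian_form_ip1: "hermitian_form (H10 \<Omega>) (ip1 \<mu> lam \<Omega>)"
  by unfold_locales (auto intro: H10_lincomb ip1_lincomb_left H10_H1_field ip1_swap)

lemma (in bounded_domain) hermitian_form_ip0: "hermitian_form (H10 \<Omega>) (ip0 \<rho> \<Omega>)"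
  by unfold_locales (auto intro: H10_lincomb ip0_lincomb_left H10_H1_field ip0_swap)

lemma (in bounded_domain) eigenbasis_elastic:
  assumes "\<rho> > 0" "\<mu> > 0" "lam > 0" "elastic_eigenbasis \<mu> lam \<rho> \<Omega> \<psi> \<kappa>" "\<omega>\<^sup>2 \<notin> range \<kappa>"
  shows "eigenbasis (H10 \<Omega>) (ip1 \<mu> lam \<Omega>) (ip0 \<rho> \<Omega>) \<psi> \<kappa> \<omega>"
proof (rule eigenbasis.intro)
  note basis = assms(4)[unfolded elastic_eigenbasis_def]
  show "hermitian_form (H10 \<Omega>) (ip1 \<mu> lam \<Omega>)" by (rule hermitian_form_ip1)
  show "hermitian_form (H10 \<Omega>) (ip0 \<rho> \<Omega>)" by (rule hermitian_form_ip0)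
  show "0 \<le> Re (ip1 \<mu> lam \<Omega> u u)" "0 \<le> Re (ip0 \<rho> \<Omega> u u)" for u
    using assms(1-3) by (simp_all add: ip1_nonneg ip0_nonneg)
  show "\<psi> n \<in> H10 \<Omega>" "0 < \<kappa> n" "mono \<kappa>" "filterlim \<kappa> at_top sequentially"
    "v \<in> H10 \<Omega> \<Longrightarrow> ip1 \<mu> lam \<Omega> (\<psi> n) v = of_real (\<kappa> n) * ip0 \<rho> \<Omega> (\<psi> n) v"
    "n \<noteq> m \<Longrightarrow> ip0 \<rho> \<Omega> (\<psi> n) (\<psi> m) = 0" for n m v
    using basis by blast+
  show "Re (ip1 \<mu> lam \<Omega> (\<psi> n) (\<psi> n) + ip0 \<rho> \<Omega> (\<psi> n) (\<psi> n)) = 1" for n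
  proof -
    have "normV \<mu> lam \<rho> \<Omega> (\<psi> n) = 1" using basis by blast
    then show ?thesis by (simp add: normV_def ipV_def)
  qed
  show "\<exists>N c. let d = (\<lambda>x. v x - (\<Sum>n<N. c n *s \<psi> n x)) in
      Re (ip1 \<mu> lam \<Omega> d d + ip0 \<rho> \<Omega> d d) < e" if v: "v \<in> H10 \<Omega>" and e: "0 < e" for v e
  proof -
    have "\<forall>v\<in>H10 \<Omega>. \<forall>e>0. \<exists>N c. normV \<mu> lam \<rho> \<Omega> (\<lambda>x. v x - (\<Sum>n<N. c n *s \<psi> n x)) < e"
      using basis by blast
    then obtain N c where "normV \<mu> lam \<rho> \<Omega> (\<lambda>x. v x - (\<Sum>n<N. c n *s \<psi> n x)) < sqrt e"
      using v e by (meson real_sqrt_gt_zero)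
    then show ?thesis
      by (intro exI[of _ N] exI[of _ c]) (simp add: normV_def ipV_def Let_def)
  qed
  show "\<omega>\<^sup>2 \<notin> range \<kappa>" by (rule assms(5))
qed

theorem mainTheorem1:
  fixes \<Omega> :: "(real^'d) set"
    and \<mu> lam \<rho> \<omega> :: real
    and \<psi> :: "nat \<Rightarrow> real^'d \<Rightarrow> complex^'d"
    and \<kappa> :: "nat \<Rightarrow> real"
  assumes "bounded_lipschitz_domain \<Omega>"
    and "\<rho> > 0" and "\<mu> > 0" and "lam > 0" and "\<omega> > 0"
    and "elastic_eigenbasis \<mu> lam \<rho> \<Omega> \<psi> \<kappa>"
    and "\<omega>\<^sup>2 \<notin> range \<kappa>"
  defines "T \<equiv> Top \<mu> lam \<rho> \<omega> \<Omega> \<psi> \<kappa>"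
  shows "bij_betw T (H10 \<Omega>) (H10 \<Omega>)
    \<and> (\<forall>u\<in>H10 \<Omega>. \<forall>v\<in>H10 \<Omega>. \<forall>a b :: complex.
          T (\<lambda>x. a *s u x + b *s v x) = (\<lambda>x. a *s T u x + b *s T v x))
    \<and> (\<exists>C. \<forall>v\<in>H10 \<Omega>. normV \<mu> lam \<rho> \<Omega> (T v) \<le> C * normV \<mu> lam \<rho> \<Omega> v)
    \<and> (\<exists>\<alpha>>0. \<forall>v\<in>H10 \<Omega>.
          cmod (a1 \<mu> lam \<rho> \<omega> \<Omega> v (T v)) \<ge> \<alpha> * (normV \<mu> lam \<rho> \<Omega> v)\<^sup>2)"
proof -
  interpret bounded_domain \<Omega>
    using assms(1) by unfold_locales (auto simp: bounded_lipschitz_domain_def)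
  interpret S: eigenbasis "H10 \<Omega>" "ip1 \<mu> lam \<Omega>" "ip0 \<rho> \<Omega>" \<psi> \<kappa> \<omega>
    using assms(2-4,6,7) by (rule eigenbasis_elastic)
  have inner: "ipV \<mu> lam \<rho> \<Omega> = S.inner_V"
    by (simp add: fun_eq_iff ipV_def S.inner_V_eq)
  have T: "T = S.reflection"
    unfolding T_def Top_def S.reflection_def projV_def S.orth_proj_def inner
    by (simp add: Vminus_def S.mode_sum_def image_def)
  have norm: "normV \<mu> lam \<rho> \<Omega> v = sqrt (Re (S.inner_V v v))" for v
    by (simp add: normV_def inner)
  have a1: "a1 \<mu> lam \<rho> \<omega> \<Omega> = S.pencil (\<omega>\<^sup>2)"
    by (simp add: fun_eq_iff a1_def ip0_def S.pencil_def)
  have "\<exists>C. \<forall>v\<in>H10 \<Omega>. sqrt (Re (S.inner_V (S.reflection v) (S.reflection v))) \<le> C * sqrt (Re (S.inner_V v v))"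
    by (intro exI[of _ 1]) (simp add: S.inner_V_reflection)
  moreover have "\<exists>\<alpha>>0. \<forall>v\<in>H10 \<Omega>. \<alpha> * (sqrt (Re (S.inner_V v v)))\<^sup>2 \<le> cmod (S.pencil (\<omega>\<^sup>2) v (S.reflection v))"
    using S.reflection_coercive S.inner_V_nonneg by simp
  ultimately show ?thesis
    unfolding T norm a1 using S.bij_betw_reflection S.reflection_lincomb by blast
qed

end
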